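(* Suppose the weights are $w_i=z_i\|\phi_i\|_{L^\infty}$, where $z_i\ge1$ and $z_i\to\infty$ as $i\to\infty$. For $0<\epsilon<1/2$, let the point set (with density $h>0$) and $M,R\in\mathbb N$ be such that $$E(h,M)<\epsilon,\qquad E(h,R)<\epsilon\frac{\min_{M<i\le R}\{w_i\}}{\max_{i=1,\dots,M}\{w_i\}},\qquad F(h,M,R)\le\frac{\epsilon}{\max_{i=1,\dots,M}\{w_i\}}.$$ Then there exists a constant $C(\epsilon)$ such that, whenever $\hat x$ is a minimizer of $\min_{z\in\mathbb C^K}\|z\|_{1,w}$ subject to $\|UP_Kz-y\|\le\eta$, $$\|x-\hat x\|\le C(\epsilon)\left[(1+\|P_Mw\|)\eta+\|P_M^\perp x\|_{1,w}+T_{h,K,\eta}(x)\right].$$ Moreover, $\lim_{\epsilon\to0^+}C(\epsilon)=4$.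
   Context: Setting: $D\subseteq\mathbb R^d$ a domain, $\nu\ge0$ integrable on $D$ with $\int_D\nu=1$, $\{\phi_i\}_{i\in\mathbb N}\subseteq L^2_\nu(D)\cap L^\infty(D)$ orthonormal in $L^2_\nu(D)$. $T=\{t_n\}_{n=1}^N\subseteq\overline D$ with density $h=\sup_{t\in D}\min_n|t-t_n|$, Voronoi cells $V_n=\{t\in D:|t-t_n|\le|t-t_m|\ \forall m\ne n\}$ and quadrature weights $\tau_n=\int_{V_n}\nu$. $W=\mathrm{diag}(w_1,w_2,\dots)$, $\|z\|_{1,w}=\sum_iw_i|z_i|$. $U$ is the $N\times\infty$ matrix $U_{n,i}=\sqrt{\tau_n}\phi_i(t_n)$. The target is $f=\sum_ix_i\phi_i$ with $x\in\ell^1_w(\mathbb N)$; data $y=\{\sqrt{\tau_n}(f(t_n)+e_n)\}_{n=1}^N$, $|e_n|\le\eta$. $P_M$ is the projection onto the first $M$ coordinates, $P_M^\perp=I-P_M$; $\mathbb C^K$ is identified with sequences supported in $\{1,\dots,K\}$; $P_Mw=(w_1,\dots,w_M)$ and $\|\cdot\|$ is the $\ell^2$ norm. $E_2(h,M)=\|P_M-P_MU^*UP_M\|$ ($\ell^2$ operator norm), $E_\infty(h,M)=\|P_M-P_MU^*UP_M\|_\infty$ ($\ell^\infty$ operator norm), $E(h,M)=\max\{E_2,E_\infty\}$, $F(h,M,R)=\|P_R^\perp W^{-1}U^*UP_M\|_\infty$. Finally $T_{h,K,\eta}(x)=\inf\{\|x-\bar x\|_{1,w}:\bar x\in\mathbb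 C^K,\ \|UP_K\bar x-y\|\le\eta\}$. *)

theory Defs
  imports "HOL-Analysis.Analysis"
begin

text \<open>Conventions: all index sets are 0-based. Basis functions are indexed by
 i = 0,1,2,...; the sample points by n = 0..N-1. Thus the paper's P_M (first M
 coordinates) is "i < M", and the paper's range M < i <= R becomes M <= i < R.\<close>

definition is_l2 :: "(nat \<Rightarrow> complex) \<Rightarrow> bool" where
  "is_l2 v \<longleftrightarrow> summable (\<lambda>i. (cmod (v i))\<^sup>2)"

definition seq_l2norm :: "(nat \<Rightarrow> complex) \<Rightarrow> real" where
  "seq_l2norm v = sqrt (\<Sum>i. (cmod (v i))\<^sup>2)"

definition is_linf :: "(nat \<Rightarrow> complex) \<Rightarrow> bool" where
  "is_linf v \<longleftrightarrow> bounded (range v)"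

definition seq_linfnorm :: "(nat \<Rightarrow> complex) \<Rightarrow> real" where
  "seq_linfnorm v = (SUP i. cmod (v i))"

definition wl1norm :: "(nat \<Rightarrow> real) \<Rightarrow> (nat \<Rightarrow> complex) \<Rightarrow> real" where
  "wl1norm w v = (\<Sum>i. w i * cmod (v i))"

definition opnorm_l2 :: "((nat \<Rightarrow> complex) \<Rightarrow> (nat \<Rightarrow> complex)) \<Rightarrow> real" where
  "opnorm_l2 A = Sup ((\<lambda>v. seq_l2norm (A v)) ` {v. is_l2 v \<and> seq_l2norm v \<le> 1})"

definition opnorm_linf :: "((nat \<Rightarrow> complex) \<Rightarrow> (nat \<Rightarrow> complex)) \<Rightarrow> real" where
  "opnorm_linf A = Sup ((\<lambda>v. seq_linfnorm (A v)) ` {v. is_linf v \<and> seq_linfnorm v \<le> 1})"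

text \<open>Identification of \<open>\<complex>^K\<close> with sequences supported in the first K coordinates.\<close>
definition supported_in :: "nat \<Rightarrow> (nat \<Rightarrow> complex) \<Rightarrow> bool" where
  "supported_in K v \<longleftrightarrow> (\<forall>i\<ge>K. v i = 0)"

definition pt_density :: "'a::euclidean_space set \<Rightarrow> nat \<Rightarrow> (nat \<Rightarrow> 'a) \<Rightarrow> ereal" where
  "pt_density D N t = (SUP s\<in>D. ereal (Min ((\<lambda>n. dist s (t n)) ` {..<N})))"

definition voronoi :: "'a::euclidean_space set \<Rightarrow> nat \<Rightarrow> (nat \<Rightarrow> 'a) \<Rightarrow> nat \<Rightarrow> 'a set" where
  "voronoi D N t n = {s \<in> D. \<forall>m<N. m \<noteq> n \<longrightarrow> dist s (t n) \<le> dist s (t m)}"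

definition qweight :: "'a::euclidean_space set \<Rightarrow> ('a \<Rightarrow> real) \<Rightarrow> nat \<Rightarrow> (nat \<Rightarrow> 'a) \<Rightarrow> nat \<Rightarrow> real" where
  "qweight D \<nu> N t n = (LINT s:voronoi D N t n|lebesgue. \<nu> s)"

definition Umat :: "'a::euclidean_space set \<Rightarrow> ('a \<Rightarrow> real) \<Rightarrow> (nat \<Rightarrow> 'a \<Rightarrow> complex)
    \<Rightarrow> nat \<Rightarrow> (nat \<Rightarrow> 'a) \<Rightarrow> nat \<Rightarrow> nat \<Rightarrow> complex" where
  "Umat D \<nu> \<phi> N t n i = complex_of_real (sqrt (qweight D \<nu> N t n)) * \<phi> i (t n)"

definition gram :: "(nat \<Rightarrow> nat \<Rightarrow> complex) \<Rightarrow> nat \<Rightarrow> nat \<Rightarrow> nat \<Rightarrow> complex" where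
  "gram U N i j = (\<Sum>n<N. cnj (U n i) * U n j)"

definition E2 :: "(nat \<Rightarrow> nat \<Rightarrow> complex) \<Rightarrow> nat \<Rightarrow> nat \<Rightarrow> real" where
  "E2 U N M = opnorm_l2 (\<lambda>v i. if i < M then v i - (\<Sum>j<M. gram U N i j * v j) else 0)"

definition Einf :: "(nat \<Rightarrow> nat \<Rightarrow> complex) \<Rightarrow> nat \<Rightarrow> nat \<Rightarrow> real" where
  "Einf U N M = opnorm_linf (\<lambda>v i. if i < M then v i - (\<Sum>j<M. gram U N i j * v j) else 0)"

definition Eq :: "(nat \<Rightarrow> nat \<Rightarrow> complex) \<Rightarrow> nat \<Rightarrow> nat \<Rightarrow> real" where
  "Eq U N M = max (E2 U N M) (Einf U N M)"

definition Fq :: "(nat \<Rightarrow> nat \<Rightarrow> complex) \<Rightarrow> nat \<Rightarrow> (nat \<Rightarrow> real) \<Rightarrow> nat \<Rightarrow> nat \<Rightarrow> real" where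
  "Fq U N w M R = opnorm_linf
     (\<lambda>v i. if R \<le> i then (\<Sum>j<M. gram U N i j * v j) / complex_of_real (w i) else 0)"

definition resid :: "(nat \<Rightarrow> nat \<Rightarrow> complex) \<Rightarrow> nat \<Rightarrow> nat \<Rightarrow> (nat \<Rightarrow> complex) \<Rightarrow> (nat \<Rightarrow> complex) \<Rightarrow> real" where
  "resid U N K z y = sqrt (\<Sum>n<N. (cmod ((\<Sum>i<K. U n i * z i) - y n))\<^sup>2)"

definition Tq :: "(nat \<Rightarrow> nat \<Rightarrow> complex) \<Rightarrow> nat \<Rightarrow> (nat \<Rightarrow> real) \<Rightarrow> nat \<Rightarrow> real
    \<Rightarrow> (nat \<Rightarrow> complex) \<Rightarrow> (nat \<Rightarrow> complex) \<Rightarrow> real" where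
  "Tq U N w K \<eta> y x = Inf {wl1norm w (\<lambda>i. x i - xb i) | xb. supported_in K xb \<and> resid U N K xb y \<le> \<eta>}"

definition is_wl1_minimizer :: "(nat \<Rightarrow> nat \<Rightarrow> complex) \<Rightarrow> nat \<Rightarrow> (nat \<Rightarrow> real) \<Rightarrow> nat \<Rightarrow> real
    \<Rightarrow> (nat \<Rightarrow> complex) \<Rightarrow> (nat \<Rightarrow> complex) \<Rightarrow> bool" where
  "is_wl1_minimizer U N w K \<eta> y xh \<longleftrightarrow>
     supported_in K xh \<and> resid U N K xh y \<le> \<eta> \<and>
     (\<forall>z. supported_in K z \<and> resid U N K z y \<le> \<eta> \<longrightarrow> wl1norm w xh \<le> wl1norm w z)"

text \<open>Sup norm of \<open>\<phi>_i\<close> (the functions are sampled pointwise on the closure of D).\<close>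
definition supnorm_on :: "'a set \<Rightarrow> ('a \<Rightarrow> complex) \<Rightarrow> real" where
  "supnorm_on S g = (SUP s\<in>S. cmod (g s))"

definition orthonormal_L2 :: "'a::euclidean_space set \<Rightarrow> ('a \<Rightarrow> real) \<Rightarrow> (nat \<Rightarrow> 'a \<Rightarrow> complex) \<Rightarrow> bool" where
  "orthonormal_L2 D \<nu> \<phi> \<longleftrightarrow> (\<forall>i j.
     set_integrable lebesgue D (\<lambda>s. complex_of_real (\<nu> s) * \<phi> i s * cnj (\<phi> j s)) \<and>
     (LINT s:D|lebesgue. complex_of_real (\<nu> s) * \<phi> i s * cnj (\<phi> j s)) = (if i = j then 1 else 0))"

end

theory Submission
  imports Defs
begin

text \<open>Write \<open>G = U\<^sup>*U\<close> and compare the minimizer \<open>xh\<close> with any competitor \<open>xb\<close> supported in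
  the first \<open>K\<close> coordinates that fits the data; then \<open>v = xh - xb\<close> has \<open>\<parallel>U v\<parallel> \<le> 2\<eta>\<close>.
  Since \<open>E(h,M) < \<epsilon>\<close>, the block of \<open>G\<close> on the first \<open>M\<close> coordinates is within \<open>\<epsilon>\<close> of the
  identity in \<open>\<ell>\<^sup>2\<close> and \<open>\<ell>\<^sup>\<infinity>\<close>, so a Neumann series solves \<open>G a = w \<cdot> sgn xb\<close> there; the
  conditions on \<open>F(h,M,R)\<close> and \<open>E(h,R)\<close> make \<open>\<rho> = G a\<close> at most \<open>\<epsilon>/(1-\<epsilon>) w\<^sub>i\<close> beyond \<open>M\<close>.
  Pairing \<open>v\<close> with this dual certificate and using the weighted \<open>\<ell>\<^sup>1\<close> minimality of \<open>xh\<close>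
  bounds the weighted tail of \<open>v\<close>; the near isometry on the head then bounds its head in
  \<open>\<ell>\<^sup>2\<close>.  Collecting terms gives the estimate with \<open>C(\<epsilon>) = 4/(1-2\<epsilon>)\<^sup>2\<close>, and taking the
  infimum over \<open>xb\<close> yields \<open>T\<^sub>h\<^sub>,\<^sub>K\<^sub>,\<^sub>\<eta>(x)\<close>.\<close>

section \<open>Finite sums, sequence norms and operator norms\<close>

lemma sum_lessThan_split:
  "(M::nat) \<le> L \<Longrightarrow> sum f {..<L} = sum f {..<M} + sum f {M..<L}"
  by (metis atLeast0LessThan sum.atLeastLessThan_concat zero_le)

lemma cmod_sum_cnj_mult_le:
  "cmod (\<Sum>n\<in>A. cnj (f n) * g n) \<le> L2_set (\<lambda>n. cmod (f n)) A * L2_set (\<lambda>n. cmod (g n)) A"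
proof -
  have "cmod (\<Sum>n\<in>A. cnj (f n) * g n) \<le> (\<Sum>n\<in>A. \<bar>cmod (f n)\<bar> * \<bar>cmod (g n)\<bar>)"
    using norm_sum[of "\<lambda>n. cnj (f n) * g n" A] by (simp add: norm_mult)
  also have "\<dots> \<le> L2_set (\<lambda>n. cmod (f n)) A * L2_set (\<lambda>n. cmod (g n)) A"
    by (rule L2_set_mult_ineq)
  finally show ?thesis .
qed

lemma L2_set_divide: "0 \<le> c \<Longrightarrow> L2_set (\<lambda>i. f i / c) A = L2_set f A / c"
  using L2_set_right_distrib[of "1 / c" f A] by (simp add: field_simps)

lemma L2_set_cmod_power2:
  "finite A \<Longrightarrow> (L2_set (\<lambda>n. cmod (h n)) A)\<^sup>2 = Re (\<Sum>n\<in>A. cnj (h n) * h n)"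
  by (simp add: L2_set_def sum_nonneg Re_sum complex_mult_cnj cmod_power2 mult.commute[of "cnj _"])

lemma cmod_sgn_le_1: "cmod (sgn (z::complex)) \<le> 1"
  by (simp add: norm_sgn)

lemma cnj_sgn_mult_self: "cnj (sgn z) * z = of_real (cmod z)"
proof (cases "z = 0")
  case False
  have "cnj (sgn z) * z = cnj z * z / of_real (cmod z)"
    by (simp add: sgn_div_norm complex_cnj_divide scaleR_conv_of_real divide_inverse mult_ac)
  also have "\<dots> = of_real ((cmod z)\<^sup>2) / of_real (cmod z)"
    using complex_norm_square[of z] by (simp add: mult.commute)
  finally show ?thesis using False by (simp add: power2_eq_square)
qed simp

lemma Re_cnj_sgn_mult_le: "Re (cnj (sgn (z::complex)) * u) \<le> cmod u"
proof -
  have "Re (cnj (sgn z) * u) \<le> cmod (cnj (sgn z) * u)" by (rule complex_Re_le_cmod)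
  also have "\<dots> \<le> cmod u"
    using cmod_sgn_le_1[of z] by (simp add: norm_mult mult_left_le_one_le)
  finally show ?thesis .
qed

lemma gram_sesquilinear:
  "(\<Sum>i\<in>I. cnj (c i) * (\<Sum>j\<in>J. gram U N i j * d j))
     = (\<Sum>n<N. cnj (\<Sum>i\<in>I. U n i * c i) * (\<Sum>j\<in>J. U n j * d j))"
proof -
  have "(\<Sum>i\<in>I. cnj (c i) * (\<Sum>j\<in>J. gram U N i j * d j))
      = (\<Sum>n<N. \<Sum>i\<in>I. \<Sum>j\<in>J. cnj (c i) * cnj (U n i) * U n j * d j)"
    by (simp add: gram_def sum_distrib_left sum_distrib_right mult.assoc sum.swap[of _ "{..<N}"])
  also have "\<dots> = (\<Sum>n<N. cnj (\<Sum>i\<in>I. U n i * c i) * (\<Sum>j\<in>J. U n j * d j))"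
    by (simp add: sum_distrib_left sum_distrib_right mult_ac)
  finally show ?thesis .
qed

lemma gram_hermitian: "gram U N j i = cnj (gram U N i j)"
  by (simp add: gram_def mult.commute)

lemma seq_l2norm_finite_support:
  assumes "\<And>i. M \<le> i \<Longrightarrow> f i = 0"
  shows "seq_l2norm f = L2_set (\<lambda>i. cmod (f i)) {..<M}" and "is_l2 f"
proof -
  have s: "(\<lambda>i. (cmod (f i))\<^sup>2) sums (\<Sum>i<M. (cmod (f i))\<^sup>2)"
    by (rule sums_finite) (use assms in auto)
  then show "seq_l2norm f = L2_set (\<lambda>i. cmod (f i)) {..<M}"
    unfolding seq_l2norm_def L2_set_def by (simp add: sums_unique[OF s, symmetric])
  show "is_l2 f" unfolding is_l2_def using s by (rule sums_summable)
qed

lemma cmod_le_seq_l2norm: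
  assumes "is_l2 v" shows "cmod (v j) \<le> seq_l2norm v"
proof -
  have "(\<Sum>i\<in>{j}. (cmod (v i))\<^sup>2) \<le> (\<Sum>i. (cmod (v i))\<^sup>2)"
    using assms unfolding is_l2_def by (intro sum_le_suminf) auto
  then show ?thesis unfolding seq_l2norm_def by (intro real_le_rsqrt) simp
qed

lemma cmod_le_seq_linfnorm: "is_linf v \<Longrightarrow> cmod (v j) \<le> seq_linfnorm v"
  unfolding seq_linfnorm_def is_linf_def
  by (rule cSUP_upper) (auto simp: bounded_iff bdd_above_def)

lemma seq_linfnorm_finite_support:
  assumes "\<And>i. M \<le> i \<Longrightarrow> f i = 0" and "\<And>i. i < M \<Longrightarrow> cmod (f i) \<le> m" and "0 \<le> m"
  shows "is_linf f" and "seq_linfnorm f \<le> m"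
proof -
  have "cmod (f i) \<le> m" for i using assms by (cases "i < M") auto
  then show "is_linf f" unfolding is_linf_def bounded_iff by auto
  show "seq_linfnorm f \<le> m" unfolding seq_linfnorm_def
    by (rule cSUP_least) (use \<open>\<And>i. cmod (f i) \<le> m\<close> in auto)
qed

lemma seq_l2norm_le_head_tail:
  fixes u :: "nat \<Rightarrow> complex"
  assumes su: "summable (\<lambda>i. cmod (u i))"
  shows "seq_l2norm u \<le> L2_set (\<lambda>i. cmod (u i)) {..<M} + (\<Sum>i. if i < M then 0 else cmod (u i))"
proof -
  define t where "t i = (if i < M then 0 else cmod (u i))" for i
  define S where "S = suminf t"
  have t0: "0 \<le> t i" for i by (simp add: t_def)
  have st: "summable t" by (rule summable_comparison_test[OF _ su]) (auto simp: t_def)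
  have tS: "t i \<le> S" for i
    using sum_le_suminf[OF st, of "{i}"] t0 by (simp add: S_def)
  have S0: "0 \<le> S" using tS t0 order_trans by blast
  have st2: "summable (\<lambda>i. (t i)\<^sup>2)"
    by (rule summable_comparison_test[OF _ summable_mult[OF st, of S]])
       (use tS t0 in \<open>auto simp: power2_eq_square intro!: mult_right_mono\<close>)
  have sumt2: "(\<Sum>i. (t i)\<^sup>2) \<le> S\<^sup>2"
  proof -
    have "(\<Sum>i. (t i)\<^sup>2) \<le> (\<Sum>i. S * t i)"
      by (rule suminf_le)
         (use tS t0 st st2 in \<open>auto simp: power2_eq_square intro!: mult_right_mono summable_mult\<close>)
    also have "\<dots> = S\<^sup>2" by (simp add: suminf_mult[OF st] S_def power2_eq_square)
    finally show ?thesis .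
  qed
  have head: "(\<lambda>i. if i < M then (cmod (u i))\<^sup>2 else 0) sums (\<Sum>i<M. (cmod (u i))\<^sup>2)"
    using sums_finite[of "{..<M}" "\<lambda>i. if i < M then (cmod (u i))\<^sup>2 else 0"] by simp
  have "(\<lambda>i. (cmod (u i))\<^sup>2) = (\<lambda>i. (if i < M then (cmod (u i))\<^sup>2 else 0) + (t i)\<^sup>2)"
    by (auto simp: t_def fun_eq_iff)
  then have "(\<lambda>i. (cmod (u i))\<^sup>2) sums ((\<Sum>i<M. (cmod (u i))\<^sup>2) + (\<Sum>i. (t i)\<^sup>2))"
    using sums_add[OF head summable_sums[OF st2]] by simp
  then have "(\<Sum>i. (cmod (u i))\<^sup>2) \<le> (L2_set (\<lambda>i. cmod (u i)) {..<M})\<^sup>2 + S\<^sup>2"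
    using sumt2 by (simp add: sums_iff L2_set_def sum_nonneg)
  then have "seq_l2norm u \<le> sqrt ((L2_set (\<lambda>i. cmod (u i)) {..<M})\<^sup>2 + S\<^sup>2)"
    unfolding seq_l2norm_def by simp
  also have "\<dots> \<le> L2_set (\<lambda>i. cmod (u i)) {..<M} + S"
    using S0 by (intro real_le_lsqrt) (auto simp: power2_eq_square algebra_simps)
  finally show ?thesis unfolding S_def t_def .
qed

lemma le_opnorm_l2:
  assumes "\<And>v. is_l2 v \<Longrightarrow> seq_l2norm v \<le> 1 \<Longrightarrow> seq_l2norm (A v) \<le> B"
    and "is_l2 v" and "seq_l2norm v \<le> 1"
  shows "seq_l2norm (A v) \<le> opnorm_l2 A"
  unfolding opnorm_l2_def by (rule cSup_upper) (use assms in \<open>auto simp: bdd_above_def\<close>)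

lemma cmod_le_opnorm_linf:
  assumes bounded: "\<And>v i. is_linf v \<Longrightarrow> seq_linfnorm v \<le> 1 \<Longrightarrow> cmod (A v i) \<le> B"
    and "is_linf v" and "seq_linfnorm v \<le> 1"
  shows "cmod (A v i) \<le> opnorm_linf A"
proof -
  have "seq_linfnorm (A u) \<le> B" if "is_linf u" "seq_linfnorm u \<le> 1" for u
    unfolding seq_linfnorm_def by (rule cSUP_least) (use bounded that in auto)
  then have "bdd_above ((\<lambda>v. seq_linfnorm (A v)) ` {v. is_linf v \<and> seq_linfnorm v \<le> 1})"
    by (auto simp: bdd_above_def)
  moreover have "cmod (A v i) \<le> seq_linfnorm (A v)"
    unfolding seq_linfnorm_def by (rule cSUP_upper) (use assms in \<open>auto simp: bdd_above_def\<close>)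
  ultimately show ?thesis
    unfolding opnorm_linf_def using assms(2,3) by (auto intro: cSup_upper2)
qed

lemma cmod_sum_gram_mult_le:
  assumes "\<And>j. cmod (v j) \<le> 1"
  shows "cmod (\<Sum>j<M. gram U N i j * v j) \<le> (\<Sum>j<M. cmod (gram U N i j))"
  by (rule order_trans[OF norm_sum sum_mono])
     (use assms in \<open>auto simp: norm_mult intro: mult_left_le\<close>)

lemma cmod_sub_sum_gram_mult_le:
  assumes "\<And>j. cmod (v j) \<le> 1"
  shows "cmod (v i - (\<Sum>j<M. gram U N i j * v j)) \<le> 1 + (\<Sum>j<M. cmod (gram U N i j))"
  using norm_triangle_ineq4[of "v i"] cmod_sum_gram_mult_le[where v=v and M=M and U=U and N=N and i=i]
    assms by (smt (verit))

text \<open>The operator norms in the definitions of \<open>E\<close> and \<open>F\<close> are suprema of real sets;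
  each bound below first checks that the set is bounded, since otherwise the supremum is
  an unspecified value.\<close>

lemma L2_set_le_E2:
  "L2_set (\<lambda>i. cmod (b i - (\<Sum>j<M. gram U N i j * b j))) {..<M}
     \<le> E2 U N M * L2_set (\<lambda>j. cmod (b j)) {..<M}"
proof -
  define A where "A = (\<lambda>(v::nat\<Rightarrow>complex) i. if i < M then v i - (\<Sum>j<M. gram U N i j * v j) else 0)"
  define nb where "nb = L2_set (\<lambda>j. cmod (b j)) {..<M}"
  have l2_A: "seq_l2norm (A v) = L2_set (\<lambda>i. cmod (A v i)) {..<M}" for v
    by (rule seq_l2norm_finite_support) (simp add: A_def)
  show ?thesis
  proof (cases "nb = 0")
    case True
    then have "\<forall>j\<in>{..<M}. b j = 0" unfolding nb_def by (simp add: L2_set_eq_0_iff)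
    then show ?thesis by (simp add: L2_set_0')
  next
    case False
    then have nb_pos: "0 < nb" by (simp add: nb_def order_less_le)
    define v where "v j = (if j < M then b j / of_real nb else 0)" for j
    have v: "seq_l2norm v = L2_set (\<lambda>i. cmod (v i)) {..<M}" "is_l2 v"
      by (rule seq_l2norm_finite_support[where M=M]; simp add: v_def)+
    have "L2_set (\<lambda>i. cmod (v i)) {..<M} = L2_set (\<lambda>i. cmod (b i) / nb) {..<M}"
      using nb_pos by (intro L2_set_cong) (auto simp: v_def norm_divide)
    then have v_norm: "seq_l2norm v = 1"
      using v(1) nb_pos by (simp add: L2_set_divide nb_def)
    have bounded: "seq_l2norm (A u) \<le> (\<Sum>i<M. 1 + (\<Sum>j<M. cmod (gram U N i j)))"
      if "is_l2 u" "seq_l2norm u \<le> 1" for u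
    proof -
      have u_le: "cmod (u j) \<le> 1" for j using cmod_le_seq_l2norm[OF that(1), of j] that(2) by simp
      have "cmod (A u i) \<le> 1 + (\<Sum>j<M. cmod (gram U N i j))" for i
        using cmod_sub_sum_gram_mult_le[where v=u and M=M and i=i, OF u_le] by (simp add: A_def sum_nonneg)
      then show ?thesis
        unfolding l2_A by (intro order_trans[OF L2_set_le_sum sum_mono]) auto
    qed
    have "seq_l2norm (A v) \<le> opnorm_l2 A"
      by (rule le_opnorm_l2[OF bounded]) (use v v_norm in auto)
    then have le_E2: "seq_l2norm (A v) \<le> E2 U N M" by (simp add: E2_def A_def)
    have "A v i = (b i - (\<Sum>j<M. gram U N i j * b j)) / of_real nb" if "i < M" for i
      using that by (simp add: A_def v_def diff_divide_distrib sum_divide_distrib)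
    then have "seq_l2norm (A v) = L2_set (\<lambda>i. cmod (b i - (\<Sum>j<M. gram U N i j * b j)) / nb) {..<M}"
      unfolding l2_A using nb_pos by (intro L2_set_cong) (auto simp: norm_divide)
    with le_E2 show ?thesis
      using nb_pos by (simp add: L2_set_divide nb_def divide_le_eq mult.commute)
  qed
qed

lemma cmod_le_Einf:
  assumes b_le: "\<And>j. j < M \<Longrightarrow> cmod (b j) \<le> m" and i: "i < M"
  shows "cmod (b i - (\<Sum>j<M. gram U N i j * b j)) \<le> Einf U N M * m"
proof -
  define A where "A = (\<lambda>(v::nat\<Rightarrow>complex) i. if i < M then v i - (\<Sum>j<M. gram U N i j * v j) else 0)"
  have "0 \<le> m" using b_le[OF i] norm_ge_zero order_trans by blast
  show ?thesis
  proof (cases "m = 0")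
    case True
    then show ?thesis using b_le i by simp
  next
    case False
    with \<open>0 \<le> m\<close> have m_pos: "0 < m" by simp
    define v where "v j = (if j < M then b j / of_real m else 0)" for j
    have v_le: "cmod (v j) \<le> 1" if "j < M" for j
      using b_le[OF that] m_pos that by (simp add: v_def norm_divide)
    have v_zero: "v j = 0" if "M \<le> j" for j using that by (simp add: v_def)
    have v: "is_linf v" "seq_linfnorm v \<le> 1"
      using seq_linfnorm_finite_support[of M v 1, OF v_zero v_le] by simp_all
    have bounded: "cmod (A u k) \<le> 1 + (\<Sum>i<M. \<Sum>j<M. cmod (gram U N i j))"
      if "is_linf u" "seq_linfnorm u \<le> 1" for u k
    proof (cases "k < M")
      case True
      have u_le: "cmod (u j) \<le> 1" for j using cmod_le_seq_linfnorm[OF that(1), of j] that(2) by simp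
      have "(\<Sum>j<M. cmod (gram U N k j)) \<le> (\<Sum>i<M. \<Sum>j<M. cmod (gram U N i j))"
        using True by (intro member_le_sum) (auto intro: sum_nonneg)
      then show ?thesis
        using True cmod_sub_sum_gram_mult_le[where v=u and M=M and i=k and U=U and N=N, OF u_le] by (simp add: A_def)
    qed (simp add: A_def sum_nonneg add_nonneg_nonneg)
    have "cmod (A v i) \<le> opnorm_linf A" by (rule cmod_le_opnorm_linf[OF bounded v])
    then have "cmod (A v i) \<le> Einf U N M" by (simp add: Einf_def A_def)
    moreover have "A v i = (b i - (\<Sum>j<M. gram U N i j * b j)) / of_real m"
      using i by (simp add: A_def v_def diff_divide_distrib sum_divide_distrib)
    ultimately show ?thesis using m_pos by (simp add: norm_divide divide_le_eq mult.commute)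
  qed
qed

lemma cmod_sum_gram_le_Fq:
  assumes w_pos: "\<And>i. 0 < w i" and rows: "\<And>i. (\<Sum>j<M. cmod (gram U N i j)) \<le> B * w i"
    and b_le: "\<And>j. j < M \<Longrightarrow> cmod (b j) \<le> m" and "0 \<le> m" and i: "R \<le> i"
  shows "cmod (\<Sum>j<M. gram U N i j * b j) \<le> Fq U N w M R * w i * m"
proof -
  define A where "A = (\<lambda>(v::nat\<Rightarrow>complex) i.
    if R \<le> i then (\<Sum>j<M. gram U N i j * v j) / complex_of_real (w i) else 0)"
  have "0 \<le> B * w 0" using rows[of 0] sum_nonneg[of "{..<M}"] by (smt (verit) norm_ge_zero)
  then have "0 \<le> B" using w_pos[of 0] by (simp add: zero_le_mult_iff)
  show ?thesis
  proof (cases "m = 0")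
    case True
    then show ?thesis using b_le by simp
  next
    case False
    with \<open>0 \<le> m\<close> have m_pos: "0 < m" by simp
    define v where "v j = (if j < M then b j / of_real m else 0)" for j
    have v_le: "cmod (v j) \<le> 1" if "j < M" for j
      using b_le[OF that] m_pos that by (simp add: v_def norm_divide)
    have v_zero: "v j = 0" if "M \<le> j" for j using that by (simp add: v_def)
    have v: "is_linf v" "seq_linfnorm v \<le> 1"
      using seq_linfnorm_finite_support[of M v 1, OF v_zero v_le] by simp_all
    have bounded: "cmod (A u k) \<le> B" if "is_linf u" "seq_linfnorm u \<le> 1" for u k
    proof (cases "R \<le> k")
      case True
      have u_le: "cmod (u j) \<le> 1" for j using cmod_le_seq_linfnorm[OF that(1), of j] that(2) by simp
      then have "cmod (\<Sum>j<M. gram U N k j * u j) \<le> B * w k"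
        using cmod_sum_gram_mult_le[where v=u and M=M and i=k and U=U and N=N, OF u_le] rows[of k]
        by linarith
      then show ?thesis using True w_pos[of k] by (simp add: A_def norm_divide divide_le_eq)
    qed (simp add: A_def \<open>0 \<le> B\<close>)
    have "cmod (A v i) \<le> opnorm_linf A" by (rule cmod_le_opnorm_linf[OF bounded v])
    then have "cmod (A v i) \<le> Fq U N w M R" by (simp add: Fq_def A_def)
    moreover have "A v i = (\<Sum>j<M. gram U N i j * b j) / of_real m / of_real (w i)"
      using i by (simp add: A_def v_def sum_divide_distrib)
    ultimately show ?thesis
      using w_pos[of i] m_pos by (simp add: norm_divide norm_mult divide_le_eq mult_ac)
  qed
qed

section \<open>The weighted \<open>\<ell>\<^sup>1\<close> recovery argument\<close>

text \<open>The increments of the iteration \<open>a \<mapsto> c + a - G a\<close> are multiplied by \<open>I - G\<close> at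
  every step, so they decay like \<open>\<epsilon>\<^sup>k\<close> and the iterates converge to a solution of \<open>G a = c\<close>.\<close>

lemma solvable_if_linf_near_identity:
  fixes G :: "nat \<Rightarrow> nat \<Rightarrow> complex" and c :: "nat \<Rightarrow> complex"
  assumes "0 \<le> \<epsilon>" "\<epsilon> < 1"
    and near_id: "\<And>b m i. (\<And>j. j < M \<Longrightarrow> cmod (b j) \<le> m) \<Longrightarrow> i < M \<Longrightarrow>
                   cmod (b i - (\<Sum>j<M. G i j * b j)) \<le> \<epsilon> * m"
    and c_le: "\<And>j. j < M \<Longrightarrow> cmod (c j) \<le> mc"
  shows "\<exists>a. \<forall>i<M. (\<Sum>j<M. G i j * a j) = c i"
proof -
  define T where "T a i = c i + a i - (\<Sum>j<M. G i j * a j)" for a i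
  define f where "f k = (T ^^ k) (\<lambda>_. 0)" for k
  define d where "d k i = f (Suc k) i - f k i" for k i
  have f_Suc: "f (Suc k) = T (f k)" for k by (simp add: f_def)
  have d_0: "d 0 = c" by (simp add: d_def f_def T_def fun_eq_iff)
  have d_Suc: "d (Suc k) i = d k i - (\<Sum>j<M. G i j * d k j)" for k i
    by (simp add: d_def f_Suc T_def algebra_simps sum_subtractf sum.distrib)
  have d_le: "\<forall>j<M. cmod (d k j) \<le> \<epsilon> ^ k * mc" for k
  proof (induction k)
    case 0
    then show ?case using c_le by (simp add: d_0)
  next
    case (Suc k)
    show ?case using near_id[of "d k" "\<epsilon> ^ k * mc"] Suc by (auto simp: d_Suc mult.assoc)
  qed
  have f_sum: "f k i = (\<Sum>l<k. d l i)" for k i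
    by (induction k) (auto simp: d_def f_def)
  define a where "a i = (\<Sum>l. d l i)" for i
  have lim: "(\<lambda>k. f k i) \<longlonglongrightarrow> a i" if "i < M" for i
  proof -
    have "summable (\<lambda>l. d l i)"
    proof (rule summable_comparison_test)
      show "\<exists>N. \<forall>n\<ge>N. norm (d n i) \<le> \<epsilon> ^ n * mc" using d_le that by auto
      show "summable (\<lambda>n. \<epsilon> ^ n * mc)" using assms(1,2) by (intro summable_mult2 summable_geometric) auto
    qed
    then show ?thesis unfolding f_sum a_def by (rule summable_LIMSEQ)
  qed
  have "(\<Sum>j<M. G i j * a j) = c i" if "i < M" for i
  proof -
    have "(\<lambda>k. f (Suc k) i) \<longlonglongrightarrow> c i + a i - (\<Sum>j<M. G i j * a j)"
      unfolding f_Suc T_def using lim that by (intro tendsto_intros) auto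
    from LIMSEQ_unique[OF LIMSEQ_Suc[OF lim[OF that]] this] show ?thesis
      by (simp add: algebra_simps)
  qed
  then show ?thesis by blast
qed

text \<open>What the recovery argument uses of the hypotheses on \<open>E\<close> and \<open>F\<close>; \<open>mw\<close> stands for
  \<open>max\<^sub>i\<^sub>\<le>\<^sub>M w\<^sub>i\<close>.  \<open>head_l2\<close> and \<open>head_linf\<close> express \<open>E(h,M) < \<epsilon>\<close>, \<open>offblock\<close>
  combines the bounds on \<open>F(h,M,R)\<close> and \<open>E(h,R)\<close>, and \<open>column_l2\<close> is its adjoint form.\<close>

locale recovery_conditions =
  fixes U :: "nat \<Rightarrow> nat \<Rightarrow> complex" and N M :: nat and w :: "nat \<Rightarrow> real" and \<epsilon> mw :: real
  assumes eps_pos: "0 < \<epsilon>" and eps_less: "\<epsilon> < 1/2"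
    and M_pos: "0 < M"
    and one_le_w: "\<And>i. 1 \<le> w i"
    and w_le_mw: "\<And>j. j < M \<Longrightarrow> w j \<le> mw"
    and head_l2: "\<And>b. L2_set (\<lambda>i. cmod (b i - (\<Sum>j<M. gram U N i j * b j))) {..<M}
                    \<le> \<epsilon> * L2_set (\<lambda>j. cmod (b j)) {..<M}"
    and head_linf: "\<And>b m i. (\<And>j. j < M \<Longrightarrow> cmod (b j) \<le> m) \<Longrightarrow> i < M \<Longrightarrow>
                      cmod (b i - (\<Sum>j<M. gram U N i j * b j)) \<le> \<epsilon> * m"
    and offblock: "\<And>b m i. (\<And>j. j < M \<Longrightarrow> cmod (b j) \<le> m) \<Longrightarrow> M \<le> i \<Longrightarrow>
                     cmod (\<Sum>j<M. gram U N i j * b j) \<le> \<epsilon> / mw * w i * m"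
    and column_l2: "\<And>i. M \<le> i \<Longrightarrow> L2_set (\<lambda>j. cmod (gram U N j i)) {..<M} \<le> \<epsilon> * w i"
begin

lemma w_nonneg: "0 \<le> w i"
  using one_le_w[of i] by simp

lemma one_le_mw: "1 \<le> mw"
  using one_le_w[of 0] w_le_mw[OF M_pos] by simp

lemma cmod_le_if_gram_eq:
  assumes sol: "\<And>i. i < M \<Longrightarrow> (\<Sum>j<M. gram U N i j * a j) = c i"
    and c_le: "\<And>j. j < M \<Longrightarrow> cmod (c j) \<le> m" and j: "j < M"
  shows "cmod (a j) \<le> m / (1 - \<epsilon>)"
proof -
  define ma where "ma = Max ((\<lambda>j. cmod (a j)) ` {..<M})"
  have ma_ge: "cmod (a j) \<le> ma" if "j < M" for j unfolding ma_def using that by (intro Max_ge) auto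
  obtain j0 where j0: "j0 < M" "cmod (a j0) = ma"
    using Max_in[of "(\<lambda>j. cmod (a j)) ` {..<M}"] M_pos unfolding ma_def by fastforce
  have "cmod (a j0 - c j0) \<le> \<epsilon> * ma" using head_linf[of a ma j0] ma_ge j0 sol by simp
  moreover have "cmod (a j0) \<le> cmod (a j0 - c j0) + cmod (c j0)"
    by (metis add.commute norm_triangle_sub)
  ultimately have "(1 - \<epsilon>) * ma \<le> m" using c_le[OF j0(1)] j0(2) by (simp add: algebra_simps)
  then have "ma \<le> m / (1 - \<epsilon>)" using eps_less by (simp add: field_simps)
  then show ?thesis using ma_ge[OF j] by simp
qed

lemma L2_set_le_if_gram_eq:
  assumes sol: "\<And>i. i < M \<Longrightarrow> (\<Sum>j<M. gram U N i j * a j) = c i"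
  shows "L2_set (\<lambda>j. cmod (a j)) {..<M} \<le> L2_set (\<lambda>j. cmod (c j)) {..<M} / (1 - \<epsilon>)"
proof -
  have "L2_set (\<lambda>j. cmod (a j)) {..<M} \<le> L2_set (\<lambda>j. cmod (a j - c j) + cmod (c j)) {..<M}"
    by (rule L2_set_mono) (auto, metis add.commute norm_triangle_sub)
  also have "\<dots> \<le> L2_set (\<lambda>j. cmod (a j - c j)) {..<M} + L2_set (\<lambda>j. cmod (c j)) {..<M}"
    by (rule L2_set_triangle_ineq)
  also have "L2_set (\<lambda>j. cmod (a j - c j)) {..<M} \<le> \<epsilon> * L2_set (\<lambda>j. cmod (a j)) {..<M}"
  proof -
    have "L2_set (\<lambda>j. cmod (a j - c j)) {..<M}
        = L2_set (\<lambda>i. cmod (a i - (\<Sum>j<M. gram U N i j * a j))) {..<M}"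
      by (rule L2_set_cong) (simp_all add: sol)
    then show ?thesis using head_l2[of a] by simp
  qed
  finally have "(1 - \<epsilon>) * L2_set (\<lambda>j. cmod (a j)) {..<M} \<le> L2_set (\<lambda>j. cmod (c j)) {..<M}"
    by (simp add: algebra_simps)
  then show ?thesis using eps_less by (simp add: field_simps)
qed

text \<open>A dual certificate \<open>\<rho> = U\<^sup>*U a\<close> for the weighted \<open>\<ell>\<^sup>1\<close> problem; \<open>a\<close> comes from the Neumann
  series on the head and the \<open>offblock\<close> bound keeps \<open>\<rho>\<close> small off the head.\<close>

lemma dual_certificate:
  assumes c_le_w: "\<And>j. j < M \<Longrightarrow> cmod (c j) \<le> w j"
  obtains a where "\<And>i. i < M \<Longrightarrow> (\<Sum>j<M. gram U N i j * a j) = c i"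
    and "L2_set (\<lambda>n. cmod (\<Sum>j<M. U n j * a j)) {..<N} \<le> L2_set w {..<M} / (1 - \<epsilon>)"
    and "\<And>i. M \<le> i \<Longrightarrow> cmod (\<Sum>j<M. gram U N i j * a j) \<le> \<epsilon> / (1 - \<epsilon>) * w i"
proof -
  have c_le_mw: "cmod (c j) \<le> mw" if "j < M" for j using c_le_w[OF that] w_le_mw[OF that] by simp
  obtain a where sol: "\<And>i. i < M \<Longrightarrow> (\<Sum>j<M. gram U N i j * a j) = c i"
    using solvable_if_linf_near_identity[of \<epsilon> M "gram U N" c mw, OF _ _ head_linf c_le_mw]
      eps_pos eps_less by auto
  define W where "W = L2_set w {..<M}"
  have "0 \<le> W" by (simp add: W_def)
  have L2_c: "L2_set (\<lambda>j. cmod (c j)) {..<M} \<le> W"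
    unfolding W_def by (rule L2_set_mono) (use c_le_w in auto)
  have "0 < 1 - \<epsilon>" using eps_less by simp
  then have "0 \<le> 1 - \<epsilon>" and "0 \<le> W / (1 - \<epsilon>)" using \<open>0 \<le> W\<close> by simp_all
  have L2_a: "L2_set (\<lambda>j. cmod (a j)) {..<M} \<le> W / (1 - \<epsilon>)"
    using order_trans[OF L2_set_le_if_gram_eq[OF sol] divide_right_mono[OF L2_c \<open>0 \<le> 1 - \<epsilon>\<close>]] .
  have "(L2_set (\<lambda>n. cmod (\<Sum>j<M. U n j * a j)) {..<N})\<^sup>2
      = Re (\<Sum>n<N. cnj (\<Sum>j<M. U n j * a j) * (\<Sum>j<M. U n j * a j))"
    by (simp add: L2_set_cmod_power2)
  also have "\<dots> = Re (\<Sum>i<M. cnj (a i) * (\<Sum>j<M. gram U N i j * a j))"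
    by (simp only: gram_sesquilinear)
  also have "\<dots> = Re (\<Sum>i<M. cnj (a i) * c i)" using sol by simp
  also have "\<dots> \<le> L2_set (\<lambda>j. cmod (a j)) {..<M} * L2_set (\<lambda>j. cmod (c j)) {..<M}"
    by (rule order_trans[OF complex_Re_le_cmod cmod_sum_cnj_mult_le])
  also have "\<dots> \<le> W / (1 - \<epsilon>) * W"
    by (rule mult_mono[OF L2_a L2_c \<open>0 \<le> W / (1 - \<epsilon>)\<close> L2_set_nonneg])
  also have "\<dots> \<le> (W / (1 - \<epsilon>))\<^sup>2"
  proof -
    have "W * (1 - \<epsilon>) \<le> W" using \<open>0 \<le> W\<close> eps_pos by (intro mult_left_le) auto
    then have "W \<le> W / (1 - \<epsilon>)" unfolding pos_le_divide_eq[OF \<open>0 < 1 - \<epsilon>\<close>] .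
    then show ?thesis
      unfolding power2_eq_square by (rule mult_left_mono) fact
  qed
  finally have L2_Ua: "L2_set (\<lambda>n. cmod (\<Sum>j<M. U n j * a j)) {..<N} \<le> W / (1 - \<epsilon>)"
    by (rule power2_le_imp_le) fact
  have tail: "cmod (\<Sum>j<M. gram U N i j * a j) \<le> \<epsilon> / (1 - \<epsilon>) * w i" if "M \<le> i" for i
  proof -
    have "cmod (\<Sum>j<M. gram U N i j * a j) \<le> \<epsilon> / mw * w i * (mw / (1 - \<epsilon>))"
      using offblock[OF cmod_le_if_gram_eq[OF sol c_le_mw] that] .
    also have "\<dots> = \<epsilon> / (1 - \<epsilon>) * w i" using one_le_mw eps_less by (simp add: field_simps)
    finally show ?thesis .
  qed
  from that[OF sol _ tail] L2_Ua show ?thesis by (simp add: W_def)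
qed

end

lemma cmod_add_Re_cnj_sgn_le: "cmod b + Re (cnj (sgn b) * (h - b)) \<le> cmod (h::complex)"
proof -
  have "cnj (sgn b) * h = of_real (cmod b) + cnj (sgn b) * (h - b)"
    using cnj_sgn_mult_self[of b] by (simp add: algebra_simps)
  then show ?thesis using Re_cnj_sgn_mult_le[of b h] by simp
qed

lemma wl1_minimality_pairing_le:
  fixes xh xb \<rho> :: "nat \<Rightarrow> complex"
  assumes "M \<le> L" and w0: "\<And>i. 0 \<le> w i"
    and \<rho>: "\<And>i. i < M \<Longrightarrow> \<rho> i = of_real (w i) * sgn (xb i)"
    and minim: "(\<Sum>i<L. w i * cmod (xh i)) \<le> (\<Sum>i<L. w i * cmod (xb i))"
  shows "Re (\<Sum>i<M. cnj (xh i - xb i) * \<rho> i) + (\<Sum>i\<in>{M..<L}. w i * cmod (xh i - xb i))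
           \<le> 2 * (\<Sum>i\<in>{M..<L}. w i * cmod (xb i))"
proof -
  have head: "w i * cmod (xb i) + Re (cnj (xh i - xb i) * \<rho> i) \<le> w i * cmod (xh i)" if "i < M" for i
  proof -
    have "Re (cnj (xh i - xb i) * \<rho> i) = Re (cnj (cnj (xh i - xb i) * \<rho> i))"
      by (simp only: cnj.sel)
    also have "\<dots> = w i * Re (cnj (sgn (xb i)) * (xh i - xb i))"
      using \<rho>[OF that] by (simp add: mult_ac)
    finally show ?thesis
      using mult_left_mono[OF cmod_add_Re_cnj_sgn_le[of "xb i" "xh i"] w0[of i]]
      by (simp add: distrib_left)
  qed
  have tail: "w i * cmod (xh i - xb i) - w i * cmod (xb i) \<le> w i * cmod (xh i)" for i
    using mult_left_mono[OF norm_triangle_ineq4[of "xh i" "xb i"] w0[of i]] by (simp add: distrib_left)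
  have "(\<Sum>i<M. w i * cmod (xb i) + Re (cnj (xh i - xb i) * \<rho> i)) \<le> (\<Sum>i<M. w i * cmod (xh i))"
    by (rule sum_mono) (rule head, simp)
  moreover have "(\<Sum>i\<in>{M..<L}. w i * cmod (xh i - xb i) - w i * cmod (xb i))
      \<le> (\<Sum>i\<in>{M..<L}. w i * cmod (xh i))"
    by (rule sum_mono) (rule tail)
  ultimately show ?thesis
    using minim unfolding sum_lessThan_split[OF \<open>M \<le> L\<close>] sum.distrib Re_sum sum_subtractf
    by linarith
qed

context recovery_conditions
begin

text \<open>Pairing \<open>xh - xb\<close> with the certificate interpolating \<open>w \<cdot> sgn xb\<close> on the head turns the
  minimality of \<open>xh\<close> into a bound on the weighted tail of \<open>xh - xb\<close>.\<close>

lemma tail_wl1_le: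
  assumes "M \<le> L"
    and res: "L2_set (\<lambda>n. cmod (\<Sum>i<L. U n i * (xh i - xb i))) {..<N} \<le> 2 * \<eta>"
    and minim: "(\<Sum>i<L. w i * cmod (xh i)) \<le> (\<Sum>i<L. w i * cmod (xb i))"
  shows "(1 - 2 * \<epsilon>) * (\<Sum>i\<in>{M..<L}. w i * cmod (xh i - xb i))
           \<le> 2 * (1 - \<epsilon>) * (\<Sum>i\<in>{M..<L}. w i * cmod (xb i)) + 2 * \<eta> * L2_set w {..<M}"
proof -
  define v where "v i = xh i - xb i" for i
  define A where "A = (\<Sum>i\<in>{M..<L}. w i * cmod (v i))"
  define B where "B = (\<Sum>i\<in>{M..<L}. w i * cmod (xb i))"
  define W where "W = L2_set w {..<M}"
  have "0 < 1 - \<epsilon>" using eps_less by simp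
  have c_le: "cmod (of_real (w j) * sgn (xb j)) \<le> w j" if "j < M" for j
    using cmod_sgn_le_1[of "xb j"] w_nonneg[of j] by (simp add: norm_mult mult_left_le)
  obtain a
    where sol: "\<And>i. i < M \<Longrightarrow> (\<Sum>j<M. gram U N i j * a j) = of_real (w i) * sgn (xb i)"
      and L2_Ua: "L2_set (\<lambda>n. cmod (\<Sum>j<M. U n j * a j)) {..<N} \<le> L2_set w {..<M} / (1 - \<epsilon>)"
      and tail: "\<And>i. M \<le> i \<Longrightarrow> cmod (\<Sum>j<M. gram U N i j * a j) \<le> \<epsilon> / (1 - \<epsilon>) * w i"
    using dual_certificate[OF c_le] by blast
  define \<rho> where "\<rho> i = (\<Sum>j<M. gram U N i j * a j)" for i
  define P where "P = (\<Sum>i<L. cnj (v i) * \<rho> i)"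
  define T where "T = (\<Sum>i\<in>{M..<L}. cnj (v i) * \<rho> i)"
  have "0 \<le> \<eta>" using order_trans[OF L2_set_nonneg res] by simp
  have "cmod P \<le> L2_set (\<lambda>n. cmod (\<Sum>i<L. U n i * v i)) {..<N}
      * L2_set (\<lambda>n. cmod (\<Sum>j<M. U n j * a j)) {..<N}"
    unfolding P_def \<rho>_def gram_sesquilinear by (rule cmod_sum_cnj_mult_le)
  also have "\<dots> \<le> 2 * \<eta> * (W / (1 - \<epsilon>))"
    using res L2_Ua \<open>0 \<le> \<eta>\<close> by (intro mult_mono) (auto simp: v_def W_def)
  finally have pairing: "(1 - \<epsilon>) * cmod P \<le> 2 * \<eta> * W"
    using \<open>0 < 1 - \<epsilon>\<close> by (simp add: field_simps)
  have "cmod T \<le> (\<Sum>i\<in>{M..<L}. cmod (v i) * (\<epsilon> / (1 - \<epsilon>) * w i))"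
    unfolding T_def \<rho>_def
  proof (rule order_trans[OF norm_sum sum_mono])
    fix i assume "i \<in> {M..<L}"
    then show "cmod (cnj (v i) * (\<Sum>j<M. gram U N i j * a j)) \<le> cmod (v i) * (\<epsilon> / (1 - \<epsilon>) * w i)"
      unfolding norm_mult complex_mod_cnj by (intro mult_left_mono tail) auto
  qed
  also have "\<dots> = \<epsilon> / (1 - \<epsilon>) * A" by (simp add: A_def sum_distrib_left mult_ac)
  finally have tail_pairing: "(1 - \<epsilon>) * cmod T \<le> \<epsilon> * A"
    using \<open>0 < 1 - \<epsilon>\<close> by (simp add: field_simps)
  have "Re (\<Sum>i<M. cnj (v i) * \<rho> i) + A \<le> 2 * B"
    unfolding A_def B_def v_def
    by (rule wl1_minimality_pairing_le[OF \<open>M \<le> L\<close> w_nonneg _ minim]) (simp add: \<rho>_def sol)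
  moreover have "Re P = Re (\<Sum>i<M. cnj (v i) * \<rho> i) + Re T"
    using sum_lessThan_split[OF \<open>M \<le> L\<close>, of "\<lambda>i. cnj (v i) * \<rho> i"] by (simp add: P_def T_def)
  ultimately have "A \<le> 2 * B + cmod P + cmod T"
    using abs_Re_le_cmod[of P] abs_Re_le_cmod[of T] by linarith
  then have "(1 - \<epsilon>) * A \<le> (1 - \<epsilon>) * (2 * B + cmod P + cmod T)"
    using \<open>0 < 1 - \<epsilon>\<close> by (intro mult_left_mono) auto
  then have "(1 - \<epsilon>) * A \<le> 2 * (1 - \<epsilon>) * B + 2 * \<eta> * W + \<epsilon> * A"
    using pairing tail_pairing by (simp add: algebra_simps)
  then show ?thesis by (simp add: A_def B_def W_def v_def algebra_simps)
qed

lemma L2_set_U_head_le: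
  "L2_set (\<lambda>n. cmod (\<Sum>j<M. U n j * v j)) {..<N} \<le> 2 * L2_set (\<lambda>i. cmod (v i)) {..<M}"
proof -
  define V where "V = L2_set (\<lambda>i. cmod (v i)) {..<M}"
  define D where "D = (\<Sum>i<M. cnj (v i) * (v i - (\<Sum>j<M. gram U N i j * v j)))"
  have "0 \<le> V" by (simp add: V_def)
  have "cmod D \<le> V * L2_set (\<lambda>i. cmod (v i - (\<Sum>j<M. gram U N i j * v j))) {..<M}"
    unfolding D_def V_def by (rule cmod_sum_cnj_mult_le)
  also have "\<dots> \<le> V * (\<epsilon> * V)"
    unfolding V_def by (rule mult_left_mono[OF head_l2]) simp
  finally have D_le: "cmod D \<le> V * (\<epsilon> * V)" .
  have "(L2_set (\<lambda>n. cmod (\<Sum>j<M. U n j * v j)) {..<N})\<^sup>2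
      = Re (\<Sum>n<N. cnj (\<Sum>j<M. U n j * v j) * (\<Sum>j<M. U n j * v j))"
    by (simp add: L2_set_cmod_power2)
  also have "\<dots> = Re (\<Sum>i<M. cnj (v i) * (\<Sum>j<M. gram U N i j * v j))"
    by (simp only: gram_sesquilinear)
  also have "\<dots> = V\<^sup>2 - Re D"
    by (simp add: V_def L2_set_cmod_power2 D_def algebra_simps sum_subtractf)
  also have "\<dots> \<le> V\<^sup>2 + V * (3 * V)"
    using D_le abs_Re_le_cmod[of D] mult_left_mono[OF mult_right_mono[of \<epsilon> 3 V] \<open>0 \<le> V\<close>]
      eps_less \<open>0 \<le> V\<close> by linarith
  also have "\<dots> = (2 * V)\<^sup>2" by (simp add: power2_eq_square)
  finally show ?thesis unfolding V_def[symmetric] by (rule power2_le_imp_le) (simp add: \<open>0 \<le> V\<close>)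
qed

lemma cmod_head_tail_coupling_le:
  "cmod (\<Sum>i<M. cnj (v i) * (\<Sum>j\<in>{M..<L}. gram U N i j * v j))
     \<le> L2_set (\<lambda>i. cmod (v i)) {..<M} * (\<epsilon> * (\<Sum>j\<in>{M..<L}. w j * cmod (v j)))"
proof -
  define V where "V = L2_set (\<lambda>i. cmod (v i)) {..<M}"
  have "0 \<le> V" by (simp add: V_def)
  have "(\<Sum>i<M. cnj (v i) * (\<Sum>j\<in>{M..<L}. gram U N i j * v j))
      = (\<Sum>j\<in>{M..<L}. v j * (\<Sum>i<M. cnj (v i) * gram U N i j))"
    by (simp add: sum_distrib_left sum_distrib_right mult_ac sum.swap[of _ "{M..<L}"])
  then have "cmod (\<Sum>i<M. cnj (v i) * (\<Sum>j\<in>{M..<L}. gram U N i j * v j))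
      \<le> (\<Sum>j\<in>{M..<L}. cmod (v j) * cmod (\<Sum>i<M. cnj (v i) * gram U N i j))"
    by (simp add: order_trans[OF norm_sum] norm_mult)
  also have "\<dots> \<le> (\<Sum>j\<in>{M..<L}. cmod (v j) * (V * (\<epsilon> * w j)))"
  proof (intro sum_mono mult_left_mono)
    fix j assume "j \<in> {M..<L}"
    have "cmod (\<Sum>i<M. cnj (v i) * gram U N i j) \<le> V * L2_set (\<lambda>i. cmod (gram U N i j)) {..<M}"
      unfolding V_def by (rule cmod_sum_cnj_mult_le)
    also have "\<dots> \<le> V * (\<epsilon> * w j)"
      using column_l2[of j] \<open>j \<in> {M..<L}\<close> \<open>0 \<le> V\<close> by (intro mult_left_mono) auto
    finally show "cmod (\<Sum>i<M. cnj (v i) * gram U N i j) \<le> V * (\<epsilon> * w j)" .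
  qed simp
  also have "\<dots> = V * (\<epsilon> * (\<Sum>j\<in>{M..<L}. w j * cmod (v j)))"
    by (simp add: sum_distrib_left mult_ac)
  finally show ?thesis unfolding V_def .
qed

text \<open>Expanding \<open>\<parallel>P\<^sub>M v\<parallel>\<^sup>2\<close> against \<open>U\<^sup>*U v\<close> leaves the defect of \<open>U\<^sup>*U\<close> on the head, the
  residual, and the coupling to the tail through the columns of \<open>U\<^sup>*U\<close>.\<close>

lemma head_l2_le:
  assumes "M \<le> L"
    and res: "L2_set (\<lambda>n. cmod (\<Sum>i<L. U n i * (xh i - xb i))) {..<N} \<le> 2 * \<eta>"
  shows "(1 - \<epsilon>) * L2_set (\<lambda>i. cmod (xh i - xb i)) {..<M}
           \<le> 4 * \<eta> + \<epsilon> * (\<Sum>i\<in>{M..<L}. w i * cmod (xh i - xb i))"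
proof -
  define v where "v i = xh i - xb i" for i
  define A where "A = (\<Sum>i\<in>{M..<L}. w i * cmod (v i))"
  define V where "V = L2_set (\<lambda>i. cmod (v i)) {..<M}"
  define T1 where "T1 = (\<Sum>i<M. cnj (v i) * (v i - (\<Sum>j<M. gram U N i j * v j)))"
  define T2 where "T2 = (\<Sum>i<M. cnj (v i) * (\<Sum>j<L. gram U N i j * v j))"
  define T3 where "T3 = (\<Sum>i<M. cnj (v i) * (\<Sum>j\<in>{M..<L}. gram U N i j * v j))"
  have "0 \<le> V" by (simp add: V_def)
  have "0 \<le> \<eta>" using order_trans[OF L2_set_nonneg res] by simp
  have "0 \<le> A" unfolding A_def using w_nonneg by (intro sum_nonneg) simp
  have "(\<Sum>i<M. cnj (v i) * v i) = T1 + T2 - T3"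
    unfolding T1_def T2_def T3_def sum_lessThan_split[OF \<open>M \<le> L\<close>]
    by (simp add: algebra_simps sum.distrib sum_subtractf)
  then have "V\<^sup>2 \<le> cmod T1 + cmod T2 + cmod T3"
    using abs_Re_le_cmod[of T1] abs_Re_le_cmod[of T2] abs_Re_le_cmod[of T3]
    by (simp add: V_def L2_set_cmod_power2)
  moreover have "cmod T1 \<le> V * (\<epsilon> * V)"
    using order_trans[OF cmod_sum_cnj_mult_le mult_left_mono[OF head_l2 L2_set_nonneg]]
    unfolding T1_def V_def .
  moreover have "cmod T2 \<le> 2 * V * (2 * \<eta>)"
  proof -
    have "cmod T2 \<le> L2_set (\<lambda>n. cmod (\<Sum>j<M. U n j * v j)) {..<N}
        * L2_set (\<lambda>n. cmod (\<Sum>i<L. U n i * v i)) {..<N}"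
      unfolding T2_def gram_sesquilinear by (rule cmod_sum_cnj_mult_le)
    also have "\<dots> \<le> 2 * V * (2 * \<eta>)"
      using res unfolding V_def
      by (intro mult_mono L2_set_U_head_le) (simp_all add: v_def)
    finally show ?thesis .
  qed
  moreover have "cmod T3 \<le> V * (\<epsilon> * A)"
    unfolding T3_def V_def A_def by (rule cmod_head_tail_coupling_le)
  ultimately have "V * V \<le> V * (\<epsilon> * V + 4 * \<eta> + \<epsilon> * A)"
    by (simp add: power2_eq_square algebra_simps)
  then have "V \<le> \<epsilon> * V + 4 * \<eta> + \<epsilon> * A \<or> V = 0"
    using \<open>0 \<le> V\<close> by (metis le_less mult_le_cancel_left_pos)
  then have "(1 - \<epsilon>) * V \<le> 4 * \<eta> + \<epsilon> * A"
    using \<open>0 \<le> \<eta>\<close> \<open>0 \<le> A\<close> eps_pos by (auto simp: algebra_simps)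
  then show ?thesis by (simp add: V_def A_def v_def)
qed

end

lemma wl1norm_finite_support:
  assumes "supported_in K z" and "K \<le> L"
  shows "wl1norm w z = (\<Sum>i<L. w i * cmod (z i))"
  unfolding wl1norm_def using assms by (intro suminf_finite) (auto simp: supported_in_def)

lemma summable_wl1_diff:
  assumes sx: "summable (\<lambda>i. w i * cmod (x i))" and w0: "\<And>i. 0 \<le> w i" and "supported_in K xb"
  shows "summable (\<lambda>i. w i * cmod (x i - xb i))"
proof (rule summable_comparison_test)
  have "summable (\<lambda>i. w i * cmod (xb i))"
    by (rule sums_summable[OF sums_finite[of "{..<K}"]])
       (use \<open>supported_in K xb\<close> in \<open>auto simp: supported_in_def not_less\<close>)
  then show "summable (\<lambda>i. w i * cmod (x i) + w i * cmod (xb i))" by (rule summable_add[OF sx])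
  show "\<exists>N. \<forall>n\<ge>N. norm (w n * cmod (x n - xb n)) \<le> w n * cmod (x n) + w n * cmod (xb n)"
    using w0 by (auto simp: abs_mult simp flip: distrib_left intro!: mult_left_mono norm_triangle_ineq4)
qed

lemma suminf_eq_head_plus_tail:
  assumes "summable (f :: nat \<Rightarrow> real)"
  shows "suminf f = (\<Sum>i<M. f i) + (\<Sum>i. if i < M then 0 else f i)"
proof -
  have head: "(\<lambda>i. if i < M then f i else 0) sums (\<Sum>i<M. f i)"
    using sums_finite[of "{..<M}" "\<lambda>i. if i < M then f i else 0"] by simp
  have "(\<lambda>i. if i < M then 0 else f i) = (\<lambda>i. f i - (if i < M then f i else 0))" by auto
  then have "(\<Sum>i. if i < M then 0 else f i) = suminf f - (\<Sum>i<M. f i)"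
    using suminf_diff[OF assms sums_summable[OF head]] sums_unique[OF head] by simp
  then show ?thesis by simp
qed

lemma feasible_residual_diff_le:
  assumes "supported_in K xh" "supported_in K xb" "resid U N K xh y \<le> \<eta>" "resid U N K xb y \<le> \<eta>"
    and "K \<le> L"
  shows "L2_set (\<lambda>n. cmod (\<Sum>i<L. U n i * (xh i - xb i))) {..<N} \<le> 2 * \<eta>"
proof -
  define r1 where "r1 n = (\<Sum>i<K. U n i * xh i) - y n" for n
  define r2 where "r2 n = (\<Sum>i<K. U n i * xb i) - y n" for n
  have "(\<Sum>i<L. U n i * (xh i - xb i)) = r1 n - r2 n" for n
  proof -
    have "(\<Sum>i\<in>{K..<L}. U n i * (xh i - xb i)) = 0"
      using assms(1,2) by (intro sum.neutral) (auto simp: supported_in_def)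
    then show ?thesis
      by (simp add: sum_lessThan_split[OF \<open>K \<le> L\<close>] r1_def r2_def algebra_simps sum_subtractf)
  qed
  then have "L2_set (\<lambda>n. cmod (\<Sum>i<L. U n i * (xh i - xb i))) {..<N}
      \<le> L2_set (\<lambda>n. cmod (r1 n) + cmod (r2 n)) {..<N}"
    by (auto intro: L2_set_mono norm_triangle_ineq4)
  also have "\<dots> \<le> L2_set (\<lambda>n. cmod (r1 n)) {..<N} + L2_set (\<lambda>n. cmod (r2 n)) {..<N}"
    by (rule L2_set_triangle_ineq)
  also have "\<dots> = resid U N K xh y + resid U N K xb y"
    by (simp add: resid_def L2_set_def r1_def r2_def)
  finally show ?thesis using assms(3,4) by linarith
qed

lemma suminf_tail_cmod_diff_le:
  assumes le_w: "\<And>i. 1 \<le> w i" and sd: "summable (\<lambda>i. w i * cmod (d i))"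
    and v0: "\<And>i. L \<le> i \<Longrightarrow> v i = 0"
  shows "(\<Sum>i. if i < M then 0 else cmod (d i - v i))
           \<le> (\<Sum>i. if i < M then 0 else w i * cmod (d i)) + (\<Sum>i\<in>{M..<L}. cmod (v i))"
proof -
  have std: "summable (\<lambda>i. if i < M then 0 else w i * cmod (d i))"
    by (rule summable_comparison_test[OF _ sd]) (use le_w in \<open>auto simp: order_trans[OF zero_le_one]\<close>)
  have stv: "(\<lambda>i. if i < M then 0 else cmod (v i)) sums (\<Sum>i\<in>{M..<L}. cmod (v i))"
    using sums_finite[of "{M..<L}" "\<lambda>i. if i < M then 0 else cmod (v i)"] v0
    by (auto simp: not_less)
  have le: "(if i < M then 0 else cmod (d i - v i))
      \<le> (if i < M then 0 else w i * cmod (d i)) + (if i < M then 0 else cmod (v i))" for i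
    using norm_triangle_ineq4[of "d i" "v i"] mult_right_mono[OF le_w[of i], of "cmod (d i)"] by simp
  have "(\<Sum>i. if i < M then 0 else cmod (d i - v i))
      \<le> (\<Sum>i. (if i < M then 0 else w i * cmod (d i)) + (if i < M then 0 else cmod (v i)))"
  proof (rule suminf_le[OF le])
    show "summable (\<lambda>i. (if i < M then 0 else w i * cmod (d i)) + (if i < M then 0 else cmod (v i)))"
      by (rule summable_add[OF std sums_summable[OF stv]])
    then show "summable (\<lambda>i. if i < M then 0 else cmod (d i - v i))"
      by (rule summable_comparison_test[rotated]) (use le in auto)
  qed
  then show ?thesis using suminf_add[OF std sums_summable[OF stv]] sums_unique[OF stv] by simp
qed

lemma seq_l2norm_diff_le:
  assumes one_le_w: "\<And>i. 1 \<le> w i" and sx: "summable (\<lambda>i. w i * cmod (x i))"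
    and "supported_in L xh" and "supported_in L xb"
  shows "seq_l2norm (\<lambda>i. x i - xh i)
           \<le> wl1norm w (\<lambda>i. x i - xb i) + L2_set (\<lambda>i. cmod (xh i - xb i)) {..<M}
             + (\<Sum>i\<in>{M..<L}. w i * cmod (xh i - xb i))"
proof -
  define d where "d i = x i - xb i" for i
  define v where "v i = xh i - xb i" for i
  have w0: "0 \<le> w i" for i using one_le_w[of i] by simp
  have le_w: "c \<le> w i * c" if "0 \<le> c" for i c using mult_right_mono[OF one_le_w that] by simp
  have u_eq: "x i - xh i = d i - v i" for i by (simp add: d_def v_def)
  have sd: "summable (\<lambda>i. w i * cmod (d i))"
    unfolding d_def by (rule summable_wl1_diff[OF sx w0 \<open>supported_in L xb\<close>])
  have v0: "v i = 0" if "L \<le> i" for i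
    using that \<open>supported_in L xh\<close> \<open>supported_in L xb\<close> by (simp add: supported_in_def v_def)
  have su: "summable (\<lambda>i. cmod (x i - xh i))"
    by (rule summable_comparison_test[OF _ summable_wl1_diff[OF sx w0 \<open>supported_in L xh\<close>]])
       (auto intro!: le_w)
  have head: "L2_set (\<lambda>i. cmod (x i - xh i)) {..<M}
      \<le> (\<Sum>i<M. w i * cmod (d i)) + L2_set (\<lambda>i. cmod (v i)) {..<M}"
  proof -
    have "L2_set (\<lambda>i. cmod (x i - xh i)) {..<M} \<le> L2_set (\<lambda>i. cmod (d i) + cmod (v i)) {..<M}"
      unfolding u_eq by (rule L2_set_mono) (auto intro: norm_triangle_ineq4)
    also have "\<dots> \<le> L2_set (\<lambda>i. cmod (d i)) {..<M} + L2_set (\<lambda>i. cmod (v i)) {..<M}"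
      by (rule L2_set_triangle_ineq)
    also have "L2_set (\<lambda>i. cmod (d i)) {..<M} \<le> (\<Sum>i<M. w i * cmod (d i))"
      by (rule order_trans[OF L2_set_le_sum sum_mono]) (auto intro: le_w)
    finally show ?thesis by simp
  qed
  have "(\<Sum>i\<in>{M..<L}. cmod (v i)) \<le> (\<Sum>i\<in>{M..<L}. w i * cmod (v i))"
    by (intro sum_mono le_w) simp
  moreover have "wl1norm w d = (\<Sum>i<M. w i * cmod (d i)) + (\<Sum>i. if i < M then 0 else w i * cmod (d i))"
    unfolding wl1norm_def by (rule suminf_eq_head_plus_tail[OF sd])
  ultimately have "seq_l2norm (\<lambda>i. x i - xh i)
      \<le> wl1norm w d + L2_set (\<lambda>i. cmod (v i)) {..<M} + (\<Sum>i\<in>{M..<L}. w i * cmod (v i))"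
    using seq_l2norm_le_head_tail[OF su, of M] head
      suminf_tail_cmod_diff_le[where v=v and L=L and M=M, OF one_le_w sd v0] unfolding u_eq
    by linarith
  then show ?thesis by (simp add: d_def[abs_def] v_def)
qed

lemma sum_tail_le_wl1:
  assumes w0: "\<And>i. 0 \<le> w i" and sx: "summable (\<lambda>i. w i * cmod (x i))" and "supported_in K xb"
  shows "(\<Sum>i\<in>{M..<L}. w i * cmod (xb i))
           \<le> wl1norm w (\<lambda>i. if i < M then 0 else x i) + wl1norm w (\<lambda>i. x i - xb i)"
proof -
  have "(\<Sum>i\<in>{M..<L}. w i * cmod (xb i))
      \<le> (\<Sum>i\<in>{M..<L}. w i * cmod (if i < M then 0 else x i) + w i * cmod (x i - xb i))"
  proof (rule sum_mono)
    fix i assume "i \<in> {M..<L}"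
    have "cmod (xb i) \<le> cmod (x i) + cmod (x i - xb i)"
      using norm_triangle_ineq4[of "x i" "x i - xb i"] by simp
    then have "w i * cmod (xb i) \<le> w i * (cmod (x i) + cmod (x i - xb i))"
      by (rule mult_left_mono) (rule w0)
    then show "w i * cmod (xb i) \<le> w i * cmod (if i < M then 0 else x i) + w i * cmod (x i - xb i)"
      using \<open>i \<in> {M..<L}\<close> by (simp add: distrib_left)
  qed
  also have "\<dots> \<le> wl1norm w (\<lambda>i. if i < M then 0 else x i) + wl1norm w (\<lambda>i. x i - xb i)"
    unfolding sum.distrib wl1norm_def
  proof (rule add_mono)
    show "(\<Sum>i\<in>{M..<L}. w i * cmod (if i < M then 0 else x i)) \<le> (\<Sum>i. w i * cmod (if i < M then 0 else x i))"
      by (rule sum_le_suminf) (auto intro: summable_comparison_test[OF _ sx] simp: w0)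
    show "(\<Sum>i\<in>{M..<L}. w i * cmod (x i - xb i)) \<le> (\<Sum>i. w i * cmod (x i - xb i))"
      by (rule sum_le_suminf[OF summable_wl1_diff[OF sx w0 \<open>supported_in K xb\<close>]]) (auto simp: w0)
  qed
  finally show ?thesis .
qed

lemma recovery_error_arith:
  fixes \<epsilon> \<eta> W A B V P T err :: real
  assumes "0 < \<epsilon>" "\<epsilon> < 1/2" "0 \<le> \<eta>" "0 \<le> W" "0 \<le> A" "0 \<le> P" "0 \<le> T"
    and tail: "(1 - 2 * \<epsilon>) * A \<le> 2 * (1 - \<epsilon>) * B + 2 * \<eta> * W"
    and head: "(1 - \<epsilon>) * V \<le> 4 * \<eta> + \<epsilon> * A"
    and err: "err \<le> T + V + A" and B: "B \<le> P + T"
  shows "err \<le> 4 / (1 - 2 * \<epsilon>)\<^sup>2 * ((1 + W) * \<eta> + P + T)"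
proof -
  define k where "k = 1 / (1 - 2 * \<epsilon>)"
  have "1 \<le> k" using assms(1,2) by (simp add: k_def)
  have "(1 - \<epsilon>) * B \<le> (1 - \<epsilon>) * (P + T)"
    by (rule mult_left_mono[OF B]) (use assms(2) in simp)
  also have "\<dots> \<le> P + T"
    using mult_nonneg_nonneg[of \<epsilon> "P + T"] assms(1,6,7) by (simp add: algebra_simps)
  finally have "(1 - \<epsilon>) * B \<le> P + T" .
  moreover have "2 * (1 - \<epsilon>) * B = 2 * ((1 - \<epsilon>) * B)" by simp
  ultimately have "(1 - 2 * \<epsilon>) * A \<le> 2 * (P + T) + 2 * \<eta> * W" using tail by (smt (verit))
  then have A_le: "A \<le> k * (2 * (P + T) + 2 * \<eta> * W)"
    using assms(2) by (simp add: k_def field_simps)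
  have "(1 - \<epsilon>) * (V + A) \<le> 4 * \<eta> + A" using head by (simp add: algebra_simps)
  then have "V + A \<le> (4 * \<eta> + A) / (1 - \<epsilon>)" using assms(2) by (simp add: field_simps)
  also have "\<dots> \<le> k * (4 * \<eta> + A)"
  proof -
    have "(4 * \<eta> + A) * (1 - 2 * \<epsilon>) \<le> (4 * \<eta> + A) * (1 - \<epsilon>)"
      using assms(1,3,5) by (intro mult_left_mono) auto
    then show ?thesis using assms(2) by (simp add: k_def divide_simps)
  qed
  finally have "err \<le> T + k * (4 * \<eta>) + k * A" using err by (simp add: algebra_simps)
  also have "k * A \<le> k * (k * (2 * (P + T) + 2 * \<eta> * W))"
    using A_le \<open>1 \<le> k\<close> by (intro mult_left_mono) auto
  finally have err_le: "err \<le> T + 4 * k * \<eta> + k * k * (2 * P + 2 * T + 2 * \<eta> * W)"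
    by (simp add: algebra_simps)
  define q where "q = k * k"
  have "1 \<le> q" using mult_mono[OF \<open>1 \<le> k\<close> \<open>1 \<le> k\<close>] \<open>1 \<le> k\<close> by (simp add: q_def)
  have "T \<le> q * T" using mult_right_mono[OF \<open>1 \<le> q\<close> assms(7)] by simp
  moreover have "k * \<eta> \<le> q * \<eta>"
    using mult_right_mono[OF mult_left_mono[OF \<open>1 \<le> k\<close>, of k] assms(3)] \<open>1 \<le> k\<close> by (simp add: q_def)
  moreover have "0 \<le> q * P" "0 \<le> q * T" "0 \<le> q * (\<eta> * W)" using \<open>1 \<le> q\<close> assms(3-7) by simp_all
  ultimately have "err \<le> 4 * q * ((1 + W) * \<eta> + P + T)"
    using err_le unfolding q_def[symmetric] by (simp add: algebra_simps)
  then show ?thesis by (simp add: q_def k_def power2_eq_square)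
qed

lemma wl1norm_nonneg:
  "(\<And>i. 0 \<le> w i) \<Longrightarrow> summable (\<lambda>i. w i * cmod (v i)) \<Longrightarrow> 0 \<le> wl1norm w v"
  unfolding wl1norm_def by (rule suminf_nonneg) auto

context recovery_conditions
begin

lemma error_le_feasible:
  assumes sx: "summable (\<lambda>i. w i * cmod (x i))" and mini: "is_wl1_minimizer U N w K \<eta> y xh"
    and xb: "supported_in K xb" "resid U N K xb y \<le> \<eta>"
  shows "seq_l2norm (\<lambda>i. x i - xh i) \<le> 4 / (1 - 2 * \<epsilon>)\<^sup>2 *
     ((1 + L2_set w {..<M}) * \<eta> + wl1norm w (\<lambda>i. if i < M then 0 else x i)
      + wl1norm w (\<lambda>i. x i - xb i))"
proof -
  have xh: "supported_in K xh" "resid U N K xh y \<le> \<eta>" and "wl1norm w xh \<le> wl1norm w xb"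
    using mini xb unfolding is_wl1_minimizer_def by auto
  define L where "L = K + M"
  have "K \<le> L" "M \<le> L" by (simp_all add: L_def)
  have supp: "supported_in L xh" "supported_in L xb"
    using xh(1) xb(1) by (auto simp: supported_in_def L_def)
  have res: "L2_set (\<lambda>n. cmod (\<Sum>i<L. U n i * (xh i - xb i))) {..<N} \<le> 2 * \<eta>"
    by (rule feasible_residual_diff_le[OF xh(1) xb(1) xh(2) xb(2) \<open>K \<le> L\<close>])
  have minim: "(\<Sum>i<L. w i * cmod (xh i)) \<le> (\<Sum>i<L. w i * cmod (xb i))"
    using \<open>wl1norm w xh \<le> wl1norm w xb\<close> wl1norm_finite_support[OF xh(1) \<open>K \<le> L\<close>]
      wl1norm_finite_support[OF xb(1) \<open>K \<le> L\<close>] by simp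
  have "0 \<le> \<eta>" using order_trans[OF L2_set_nonneg res] by simp
  have "0 \<le> (\<Sum>i\<in>{M..<L}. w i * cmod (xh i - xb i))" using w_nonneg by (simp add: sum_nonneg)
  moreover have "0 \<le> wl1norm w (\<lambda>i. if i < M then 0 else x i)"
    by (rule wl1norm_nonneg[OF w_nonneg summable_comparison_test[OF _ sx]]) (auto simp: w_nonneg)
  moreover have "0 \<le> wl1norm w (\<lambda>i. x i - xb i)"
    by (rule wl1norm_nonneg[OF w_nonneg summable_wl1_diff[OF sx w_nonneg xb(1)]])
  ultimately show ?thesis
    using recovery_error_arith[OF eps_pos eps_less \<open>0 \<le> \<eta>\<close> L2_set_nonneg _ _ _
        tail_wl1_le[OF \<open>M \<le> L\<close> res minim] head_l2_le[OF \<open>M \<le> L\<close> res]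
        seq_l2norm_diff_le[OF one_le_w sx supp] sum_tail_le_wl1[OF w_nonneg sx xb(1)]]
    by blast
qed

lemma error_le_Tq:
  assumes sx: "summable (\<lambda>i. w i * cmod (x i))" and mini: "is_wl1_minimizer U N w K \<eta> y xh"
  shows "seq_l2norm (\<lambda>i. x i - xh i) \<le> 4 / (1 - 2 * \<epsilon>)\<^sup>2 *
     ((1 + L2_set w {..<M}) * \<eta> + wl1norm w (\<lambda>i. if i < M then 0 else x i) + Tq U N w K \<eta> y x)"
proof -
  define C where "C = 4 / (1 - 2 * \<epsilon>)\<^sup>2"
  define a where "a = (1 + L2_set w {..<M}) * \<eta> + wl1norm w (\<lambda>i. if i < M then 0 else x i)"
  have "0 < C" using eps_less by (simp add: C_def)
  have "seq_l2norm (\<lambda>i. x i - xh i) / C - a \<le> Tq U N w K \<eta> y x"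
    unfolding Tq_def
  proof (rule cInf_greatest)
    show "{wl1norm w (\<lambda>i. x i - xb i) |xb. supported_in K xb \<and> resid U N K xb y \<le> \<eta>} \<noteq> {}"
      using mini unfolding is_wl1_minimizer_def by blast
  next
    fix s assume "s \<in> {wl1norm w (\<lambda>i. x i - xb i) |xb. supported_in K xb \<and> resid U N K xb y \<le> \<eta>}"
    then obtain xb where "supported_in K xb" "resid U N K xb y \<le> \<eta>" "s = wl1norm w (\<lambda>i. x i - xb i)"
      by blast
    then have "seq_l2norm (\<lambda>i. x i - xh i) \<le> C * (a + s)"
      unfolding C_def a_def using error_le_feasible[OF sx mini] by simp
    then have "seq_l2norm (\<lambda>i. x i - xh i) / C \<le> a + s"
      using \<open>0 < C\<close> by (simp add: pos_divide_le_eq mult.commute)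
    then show "seq_l2norm (\<lambda>i. x i - xh i) / C - a \<le> s" by simp
  qed
  then have "seq_l2norm (\<lambda>i. x i - xh i) / C \<le> a + Tq U N w K \<eta> y x" by simp
  then show ?thesis
    using \<open>0 < C\<close> unfolding C_def[symmetric] a_def[symmetric] by (simp add: pos_divide_le_eq mult.commute)
qed

end

section \<open>The sampling hypotheses imply the recovery conditions\<close>

lemma sum_cmod_gram_le:
  assumes U_le: "\<And>n i. n < N \<Longrightarrow> cmod (U n i) \<le> q n * s i"
  shows "(\<Sum>j<M. cmod (gram U N i j)) \<le> (\<Sum>j<M. \<Sum>n<N. q n * cmod (U n j)) * s i"
proof -
  have "(\<Sum>j<M. cmod (gram U N i j)) \<le> (\<Sum>j<M. \<Sum>n<N. cmod (U n i) * cmod (U n j))"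
    unfolding gram_def by (intro sum_mono order_trans[OF norm_sum]) (simp add: norm_mult)
  also have "\<dots> \<le> (\<Sum>j<M. \<Sum>n<N. q n * s i * cmod (U n j))"
    using U_le by (intro sum_mono mult_right_mono) auto
  finally show ?thesis by (simp add: sum_distrib_left sum_distrib_right mult_ac)
qed

lemma cmod_sum_gram_offblock_le:
  assumes w_pos: "\<And>i. 0 < w i" and rows: "\<And>i. (\<Sum>j<M. cmod (gram U N i j)) \<le> B * w i"
    and F: "Fq U N w M R \<le> c" and E: "Einf U N R \<le> c * nw"
    and nw_le: "\<And>i. M \<le> i \<Longrightarrow> i < R \<Longrightarrow> nw \<le> w i" and "0 \<le> c" and "M \<le> R"
    and b_le: "\<And>j. j < M \<Longrightarrow> cmod (b j) \<le> m" and "0 \<le> m" and "M \<le> i"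
  shows "cmod (\<Sum>j<M. gram U N i j * b j) \<le> c * w i * m"
proof (cases "R \<le> i")
  case True
  have "cmod (\<Sum>j<M. gram U N i j * b j) \<le> Fq U N w M R * w i * m"
    by (rule cmod_sum_gram_le_Fq[OF w_pos rows b_le \<open>0 \<le> m\<close> True])
  also have "\<dots> \<le> c * w i * m"
    using F w_pos[of i] \<open>0 \<le> m\<close> by (intro mult_right_mono) auto
  finally show ?thesis .
next
  case False
  define b' where "b' j = (if j < M then b j else 0)" for j
  have "(\<Sum>j<R. gram U N i j * b' j) = (\<Sum>j<M. gram U N i j * b j)"
    by (simp add: sum_lessThan_split[OF \<open>M \<le> R\<close>] b'_def)
  then have "cmod (\<Sum>j<M. gram U N i j * b j) \<le> Einf U N R * m"
    using cmod_le_Einf[of R b' m i U N] b_le \<open>0 \<le> m\<close> False \<open>M \<le> i\<close> by (simp add: b'_def)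
  also have "\<dots> \<le> c * nw * m" using E \<open>0 \<le> m\<close> by (rule mult_right_mono)
  also have "\<dots> \<le> c * w i * m"
    using nw_le[OF \<open>M \<le> i\<close>] False \<open>0 \<le> c\<close> \<open>0 \<le> m\<close> by (intro mult_right_mono mult_left_mono) auto
  finally show ?thesis .
qed

text \<open>The \<open>\<ell>\<^sup>1\<close> norm of a row of \<open>U\<^sup>*U\<close> is attained as a functional on \<open>\<ell>\<^sup>\<infinity>\<close> at the conjugate
  signs of the row, and the row is the conjugate of the column.\<close>

lemma L2_set_gram_column_le:
  assumes "\<And>b. (\<And>j. j < M \<Longrightarrow> cmod (b j) \<le> 1) \<Longrightarrow> cmod (\<Sum>j<M. gram U N i j * b j) \<le> r"
  shows "L2_set (\<lambda>j. cmod (gram U N j i)) {..<M} \<le> r"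
proof -
  have "L2_set (\<lambda>j. cmod (gram U N j i)) {..<M} \<le> (\<Sum>j<M. cmod (gram U N i j))"
    by (rule order_trans[OF L2_set_le_sum]) (simp_all add: gram_hermitian[of U N _ i])
  also have "\<dots> = cmod (\<Sum>j<M. gram U N i j * cnj (sgn (gram U N i j)))"
  proof -
    have "(\<Sum>j<M. gram U N i j * cnj (sgn (gram U N i j))) = of_real (\<Sum>j<M. cmod (gram U N i j))"
      using cnj_sgn_mult_self by (simp add: mult.commute)
    moreover have "cmod (complex_of_real (\<Sum>j<M. cmod (gram U N i j))) = (\<Sum>j<M. cmod (gram U N i j))"
      by (simp only: norm_of_real) (simp add: sum_nonneg)
    ultimately show ?thesis by simp
  qed
  also have "\<dots> \<le> r" by (rule assms) (simp add: cmod_sgn_le_1)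
  finally show ?thesis .
qed

lemma L2_set_gram_column_le_E2:
  assumes "M \<le> i" and "i < R"
  shows "L2_set (\<lambda>j. cmod (gram U N j i)) {..<M} \<le> E2 U N R"
proof -
  define b where "b j = (if j = i then 1 else 0 :: complex)" for j
  have "gram U N j i = - (b j - (\<Sum>k<R. gram U N j k * b k))" if "j < M" for j
    using that assms by (simp add: b_def if_distrib cong: if_cong)
  then have "L2_set (\<lambda>j. cmod (gram U N j i)) {..<M}
      = L2_set (\<lambda>j. cmod (b j - (\<Sum>k<R. gram U N j k * b k))) {..<M}"
    by (intro L2_set_cong) (auto simp: norm_minus_commute)
  also have "\<dots> \<le> L2_set (\<lambda>j. cmod (b j - (\<Sum>k<R. gram U N j k * b k))) {..<R}"
    unfolding L2_set_def using assms by (intro real_sqrt_le_mono sum_mono2) auto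
  also have "\<dots> \<le> E2 U N R * L2_set (\<lambda>j. cmod (b j)) {..<R}"
    by (rule L2_set_le_E2)
  also have "L2_set (\<lambda>j. cmod (b j)) {..<R} = 1"
  proof -
    have "(\<Sum>j<R. (cmod (b j))\<^sup>2) = (\<Sum>j<R. if j = i then 1 else 0)"
      by (intro sum.cong) (auto simp: b_def)
    then show ?thesis using assms by (simp add: L2_set_def)
  qed
  finally show ?thesis by simp
qed

lemma L2_set_gram_column_le_offblock_E2:
  assumes off: "\<And>b. (\<And>j. j < M \<Longrightarrow> cmod (b j) \<le> 1) \<Longrightarrow> cmod (\<Sum>j<M. gram U N i j * b j) \<le> c * w i"
    and E2: "E2 U N R \<le> c * nw" and nw_le: "i < R \<Longrightarrow> nw \<le> w i" and "0 \<le> c" and "M \<le> i"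
  shows "L2_set (\<lambda>j. cmod (gram U N j i)) {..<M} \<le> c * w i"
proof (cases "R \<le> i")
  case True
  show ?thesis by (rule L2_set_gram_column_le[OF off])
next
  case False
  have "L2_set (\<lambda>j. cmod (gram U N j i)) {..<M} \<le> E2 U N R"
    using L2_set_gram_column_le_E2[OF \<open>M \<le> i\<close>] False by simp
  also have "\<dots> \<le> c * w i"
    using E2 mult_left_mono[OF nw_le \<open>0 \<le> c\<close>] False by simp
  finally show ?thesis .
qed

lemma recovery_conditions_if_E_F:
  assumes eps: "0 < \<epsilon>" "\<epsilon> < 1/2" and "0 < M" "M < R" and one_le_w: "\<And>i. 1 \<le> w i"
    and rows: "\<And>i. (\<Sum>j<M. cmod (gram U N i j)) \<le> B * w i"
    and EM: "Eq U N M < \<epsilon>"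
    and ER: "Eq U N R < \<epsilon> * Min (w ` {M..<R}) / Max (w ` {..<M})"
    and F: "Fq U N w M R \<le> \<epsilon> / Max (w ` {..<M})"
  shows "recovery_conditions U N M w \<epsilon> (Max (w ` {..<M}))"
proof -
  define mw where "mw = Max (w ` {..<M})"
  define nw where "nw = Min (w ` {M..<R})"
  have w_le_mw: "w j \<le> mw" if "j < M" for j unfolding mw_def using that by (intro Max_ge) auto
  have w_pos: "0 < w i" for i using one_le_w[of i] by simp
  have "1 \<le> mw" using w_le_mw[OF \<open>0 < M\<close>] one_le_w[of 0] by simp
  have nw_le: "nw \<le> w i" if "M \<le> i" "i < R" for i unfolding nw_def using that by (intro Min_le) auto
  have "nw \<in> w ` {M..<R}" unfolding nw_def using \<open>M < R\<close> by (intro Min_in) auto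
  then have "0 \<le> nw" using one_le_w order_trans[OF zero_le_one] by auto
  have "E2 U N R \<le> \<epsilon> / mw * nw" "Einf U N R \<le> \<epsilon> / mw * nw"
    using ER by (simp_all add: Eq_def mw_def nw_def)
  have offblock: "cmod (\<Sum>j<M. gram U N i j * b j) \<le> \<epsilon> / mw * w i * m"
    if "\<And>j. j < M \<Longrightarrow> cmod (b j) \<le> m" "M \<le> i" for b m i
  proof (rule cmod_sum_gram_offblock_le[OF w_pos rows _ \<open>Einf U N R \<le> \<epsilon> / mw * nw\<close> nw_le _ _ that(1) _ that(2)])
    show "0 \<le> m" using that(1)[OF \<open>0 < M\<close>] norm_ge_zero order_trans by blast
  qed (use one_le_w F eps \<open>M < R\<close> \<open>1 \<le> mw\<close> in \<open>auto simp: mw_def intro: order_less_le_trans\<close>)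
  have "\<epsilon> / mw \<le> \<epsilon>"
    using divide_left_mono[OF \<open>1 \<le> mw\<close>, of \<epsilon>] eps \<open>1 \<le> mw\<close> by simp
  show ?thesis
  proof (unfold_locales, fold mw_def)
    show "L2_set (\<lambda>i. cmod (b i - (\<Sum>j<M. gram U N i j * b j))) {..<M}
        \<le> \<epsilon> * L2_set (\<lambda>j. cmod (b j)) {..<M}" for b
      using L2_set_le_E2[where b=b and M=M and U=U and N=N]
        mult_right_mono[of "E2 U N M" \<epsilon> "L2_set (\<lambda>j. cmod (b j)) {..<M}"] EM
      by (simp add: Eq_def)
    show "cmod (b i - (\<Sum>j<M. gram U N i j * b j)) \<le> \<epsilon> * m"
      if "\<And>j. j < M \<Longrightarrow> cmod (b j) \<le> m" "i < M" for b m i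
    proof -
      have "0 \<le> m" using that(1)[OF that(2)] norm_ge_zero order_trans by blast
      have "cmod (b i - (\<Sum>j<M. gram U N i j * b j)) \<le> Einf U N M * m"
        by (rule cmod_le_Einf[OF that])
      also have "\<dots> \<le> \<epsilon> * m" using EM \<open>0 \<le> m\<close> by (intro mult_right_mono) (simp_all add: Eq_def)
      finally show ?thesis .
    qed
    show "L2_set (\<lambda>j. cmod (gram U N j i)) {..<M} \<le> \<epsilon> * w i" if i: "M \<le> i" for i
    proof -
      have "L2_set (\<lambda>j. cmod (gram U N j i)) {..<M} \<le> \<epsilon> / mw * w i"
      proof (rule L2_set_gram_column_le_offblock_E2[where R=R and nw=nw])
        fix b :: "nat \<Rightarrow> complex" assume "\<And>j. j < M \<Longrightarrow> cmod (b j) \<le> 1"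
        from offblock[OF this i] show "cmod (\<Sum>j<M. gram U N i j * b j) \<le> \<epsilon> / mw * w i" by simp
      qed (use \<open>E2 U N R \<le> \<epsilon> / mw * nw\<close> nw_le i eps \<open>1 \<le> mw\<close> in auto)
      also have "\<dots> \<le> \<epsilon> * w i"
        using mult_right_mono[OF \<open>\<epsilon> / mw \<le> \<epsilon>\<close>, of "w i"] w_pos[of i] by simp
      finally show ?thesis .
    qed
  qed (fact eps \<open>0 < M\<close> one_le_w w_le_mw offblock)+
qed

text \<open>Integrate \<open>|\<phi>\<^sub>i|\<^sup>2 \<le> \<parallel>\<phi>\<^sub>i\<parallel>\<^sub>\<infinity>\<^sup>2\<close> against the probability density \<open>\<nu>\<close>.\<close>

lemma one_le_supnorm_on:
  fixes D :: "'a::euclidean_space set"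
  assumes bounded: "bounded (\<phi> i ` closure D)" and orth: "orthonormal_L2 D \<nu> \<phi>"
    and \<nu>_nonneg: "\<forall>s\<in>D. 0 \<le> \<nu> s" and \<nu>_int: "set_integrable lebesgue D \<nu>"
    and \<nu>_one: "(LINT s:D|lebesgue. \<nu> s) = 1" and "D \<noteq> {}"
  shows "1 \<le> supnorm_on (closure D) (\<phi> i)"
proof -
  define c where "c = supnorm_on (closure D) (\<phi> i)"
  define g where "g s = \<nu> s * (cmod (\<phi> i s))\<^sup>2" for s
  have c_ge: "cmod (\<phi> i s) \<le> c" if "s \<in> D" for s
    unfolding c_def supnorm_on_def using that closure_subset bounded
    by (intro cSUP_upper) (auto simp: bounded_iff bdd_above_def)
  have "0 \<le> c" using \<open>D \<noteq> {}\<close> c_ge by (meson equals0I norm_ge_zero order_trans)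
  have g_eq: "(\<lambda>s. complex_of_real (\<nu> s) * \<phi> i s * cnj (\<phi> i s)) = (\<lambda>s. complex_of_real (g s))"
    using complex_norm_square by (auto simp: g_def mult.assoc)
  have g_cint: "set_integrable lebesgue D (\<lambda>s. complex_of_real (g s))"
    and g_int: "(LINT s:D|lebesgue. complex_of_real (g s)) = 1"
    using orth[unfolded orthonormal_L2_def, rule_format, of i i] unfolding g_eq by simp_all
  have "(\<lambda>x. indicator D x *\<^sub>R complex_of_real (g x)) = (\<lambda>x. complex_of_real (indicator D x * g x))"
    by (auto simp: fun_eq_iff indicator_def)
  then have "set_integrable lebesgue D g"
    using g_cint unfolding set_integrable_def by (simp only: complex_of_real_integrable_eq) simp
  then have "(LINT s:D|lebesgue. g s) \<le> (LINT s:D|lebesgue. \<nu> s * c\<^sup>2)"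
  proof (rule set_integral_mono)
    show "set_integrable lebesgue D (\<lambda>s. \<nu> s * c\<^sup>2)" using \<nu>_int by simp
    show "g s \<le> \<nu> s * c\<^sup>2" if "s \<in> D" for s
      unfolding g_def using \<nu>_nonneg c_ge[OF that] that by (intro mult_left_mono power_mono) auto
  qed
  then have "1 \<le> c\<^sup>2" using g_int \<nu>_one by (simp add: set_integral_complex_of_real)
  then show ?thesis using power2_le_imp_le[of 1 c] \<open>0 \<le> c\<close> unfolding c_def by simp
qed

lemma cmod_Umat_le:
  assumes "bounded (\<phi> i ` closure D)" and "t n \<in> closure D"
  shows "cmod (Umat D \<nu> \<phi> N t n i) \<le> \<bar>sqrt (qweight D \<nu> N t n)\<bar> * supnorm_on (closure D) (\<phi> i)"
proof -
  have "cmod (\<phi> i (t n)) \<le> supnorm_on (closure D) (\<phi> i)"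
    unfolding supnorm_on_def using assms by (intro cSUP_upper) (auto simp: bounded_iff bdd_above_def)
  then show ?thesis unfolding Umat_def by (simp add: norm_mult mult_left_mono)
qed

lemma weighted_l1_recovery_error:
  fixes D :: "'a::euclidean_space set"
  assumes w_def: "w = (\<lambda>i. z i * supnorm_on (closure D) (\<phi> i))"
    and U_def: "U = Umat D \<nu> \<phi> N t"
    and eps: "0 < \<epsilon>" "\<epsilon> < 1/2" and "D \<noteq> {}"
    and \<nu>: "\<forall>s\<in>D. 0 \<le> \<nu> s" "set_integrable lebesgue D \<nu>" "(LINT s:D|lebesgue. \<nu> s) = 1"
    and bounded: "\<forall>i. bounded (\<phi> i ` closure D)" and orth: "orthonormal_L2 D \<nu> \<phi>"
    and one_le_z: "\<forall>i. 1 \<le> z i" and t: "\<forall>n<N. t n \<in> closure D"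
    and sx: "summable (\<lambda>i. w i * cmod (x i))"
    and "0 < M" "M < R"
    and EM: "Eq U N M < \<epsilon>"
    and ER: "Eq U N R < \<epsilon> * Min (w ` {M..<R}) / Max (w ` {..<M})"
    and F: "Fq U N w M R \<le> \<epsilon> / Max (w ` {..<M})"
    and mini: "is_wl1_minimizer U N w K \<eta> y xh"
  shows "seq_l2norm (\<lambda>i. x i - xh i) \<le> 4 / (1 - 2 * \<epsilon>)\<^sup>2 *
     ((1 + seq_l2norm (\<lambda>i. if i < M then complex_of_real (w i) else 0)) * \<eta>
      + wl1norm w (\<lambda>i. if i < M then 0 else x i) + Tq U N w K \<eta> y x)"
proof -
  define s where "s i = supnorm_on (closure D) (\<phi> i)" for i
  define B where "B = (\<Sum>j<M. \<Sum>n<N. \<bar>sqrt (qweight D \<nu> N t n)\<bar> * cmod (U n j))"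
  have one_le_s: "1 \<le> s i" for i
    unfolding s_def using one_le_supnorm_on[OF bounded[rule_format] orth \<nu> \<open>D \<noteq> {}\<close>] .
  have s_le_w: "s i \<le> w i" for i
    using mult_right_mono[OF one_le_z[rule_format] order_trans[OF zero_le_one one_le_s], of i i]
    by (simp add: w_def s_def)
  have one_le_w: "1 \<le> w i" for i using one_le_s[of i] s_le_w[of i] by simp
  have rows: "(\<Sum>j<M. cmod (gram U N i j)) \<le> B * w i" for i
  proof -
    have "(\<Sum>j<M. cmod (gram U N i j)) \<le> B * s i"
      unfolding B_def s_def U_def using bounded t by (intro sum_cmod_gram_le cmod_Umat_le) auto
    also have "\<dots> \<le> B * w i" by (rule mult_left_mono[OF s_le_w]) (simp add: B_def sum_nonneg)
    finally show ?thesis .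
  qed
  interpret recovery_conditions U N M w \<epsilon> "Max (w ` {..<M})"
    by (rule recovery_conditions_if_E_F[OF eps \<open>0 < M\<close> \<open>M < R\<close> one_le_w rows EM ER F])
  have "seq_l2norm (\<lambda>i. if i < M then complex_of_real (w i) else 0)
      = L2_set (\<lambda>i. cmod (if i < M then complex_of_real (w i) else 0)) {..<M}"
    by (rule seq_l2norm_finite_support) simp
  also have "\<dots> = L2_set w {..<M}" by (rule L2_set_cong) (simp_all add: w_nonneg)
  finally have "seq_l2norm (\<lambda>i. if i < M then complex_of_real (w i) else 0) = L2_set w {..<M}" .
  then show ?thesis using error_le_Tq[OF sx mini] by simp
qed

theorem theorem5p6:
  "\<exists>C :: real \<Rightarrow> real. (C \<longlongrightarrow> 4) (at_right 0) \<and>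
    (\<forall>(\<epsilon>::real) (D :: 'a::euclidean_space set) (\<nu> :: 'a \<Rightarrow> real) (\<phi> :: nat \<Rightarrow> 'a \<Rightarrow> complex)
       (z :: nat \<Rightarrow> real) (N::nat) (t :: nat \<Rightarrow> 'a) (M::nat) (R::nat) (K::nat)
       (x :: nat \<Rightarrow> complex) (e :: nat \<Rightarrow> complex) (\<eta>::real) (xh :: nat \<Rightarrow> complex).
     let w = (\<lambda>i. z i * supnorm_on (closure D) (\<phi> i));
         U = Umat D \<nu> \<phi> N t;
         f = (\<lambda>s. \<Sum>i. x i * \<phi> i s);
         y = (\<lambda>n. complex_of_real (sqrt (qweight D \<nu> N t n)) * (f (t n) + e n))
     in
     0 < \<epsilon> \<longrightarrow> \<epsilon> < 1/2 \<longrightarrow>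
     open D \<longrightarrow> connected D \<longrightarrow> D \<noteq> {} \<longrightarrow>
     (\<forall>s\<in>D. 0 \<le> \<nu> s) \<longrightarrow> set_integrable lebesgue D \<nu> \<longrightarrow> (LINT s:D|lebesgue. \<nu> s) = 1 \<longrightarrow>
     (\<forall>i. set_borel_measurable lebesgue D (\<phi> i)) \<longrightarrow>
     (\<forall>i. bounded (\<phi> i ` closure D)) \<longrightarrow>
     orthonormal_L2 D \<nu> \<phi> \<longrightarrow>
     (\<forall>i. 1 \<le> z i) \<longrightarrow> filterlim z at_top sequentially \<longrightarrow>
     0 < N \<longrightarrow> (\<forall>n<N. t n \<in> closure D) \<longrightarrow> 0 < pt_density D N t \<longrightarrow>
     summable (\<lambda>i. w i * cmod (x i)) \<longrightarrow>
     (\<forall>n<N. cmod (e n) \<le> \<eta>) \<longrightarrow>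
     0 < M \<longrightarrow> M < R \<longrightarrow>
     Eq U N M < \<epsilon> \<longrightarrow>
     Eq U N R < \<epsilon> * Min (w ` {M..<R}) / Max (w ` {..<M}) \<longrightarrow>
     Fq U N w M R \<le> \<epsilon> / Max (w ` {..<M}) \<longrightarrow>
     is_wl1_minimizer U N w K \<eta> y xh \<longrightarrow>
     seq_l2norm (\<lambda>i. x i - xh i)
       \<le> C \<epsilon> * ((1 + seq_l2norm (\<lambda>i. if i < M then complex_of_real (w i) else 0)) * \<eta>
                  + wl1norm w (\<lambda>i. if i < M then 0 else x i)
                  + Tq U N w K \<eta> y x))"
proof -
  have "((\<lambda>\<epsilon>::real. 4 / (1 - 2 * \<epsilon>)\<^sup>2) \<longlongrightarrow> 4 / (1 - 2 * 0)\<^sup>2) (at_right 0)"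
    by (intro tendsto_intros) auto
  then have lim: "((\<lambda>\<epsilon>::real. 4 / (1 - 2 * \<epsilon>)\<^sup>2) \<longlongrightarrow> 4) (at_right 0)" by simp
  show ?thesis
    unfolding Let_def
    by (intro exI[of _ "\<lambda>\<epsilon>. 4 / (1 - 2 * \<epsilon>)\<^sup>2"] conjI[OF lim] allI impI,
        rule weighted_l1_recovery_error[OF refl refl]; assumption)
qed
end
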